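(* Let $n\ge2$, $\lambda=\frac{n-1}2$, $m\in\mathbb N$, and let $\Phi_m=C(m)\sum_{l=0}^m\frac{l+\lambda}{\lambda}C_l^\lambda$, regarded as a zonal function on $\mathcal S^n$, where $C(m)$ is a nonzero constant. Then $$\mathrm{var}_S(\Phi_m)=\left(\frac{2m+2\lambda+1}{2m}\right)^2-1,\qquad \mathrm{var}_M(\Phi_m)=\frac{m(m+2\lambda+1)(2\lambda+1)}{2\lambda+3}.$$
   Context: $\mathcal S^n\subset\mathbb R^{n+1}$ is the unit sphere with rotation-invariant surface measure $\sigma$; a zonal function $g$ is $x\mapsto g(x\cdot\hat e)$, $\hat e=(1,0,\dots,0)$. $C_l^\lambda$ is the Gegenbauer polynomial ($\sum_lC_l^\lambda(t)r^l=(1-2tr+r^2)^{-\lambda}$). $\mathrm{var}_S(f)=\left(\frac{\int|f|^2d\sigma}{|\int x|f(x)|^2d\sigma(x)|}\right)^2-1$ (Euclidean norm of the vector integral in the denominator) and $\mathrm{var}_M(f)=-\frac{\int\Delta^*f\,\overline f\,d\sigma}{\int|f|^2d\sigma}$, where $\Delta^*$ is the Laplace–Beltrami operator on $\mathcal S^n$. *)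

theory Defs
  imports "HOL-Analysis.Analysis"
begin

text \<open>Gegenbauer polynomials via the three-term recurrence
  (equivalent to the generating function (1-2tr+r^2)^(-lambda)).\<close>
fun gegenbauer :: "real \<Rightarrow> nat \<Rightarrow> real \<Rightarrow> real" where
  "gegenbauer lam 0 t = 1"
| "gegenbauer lam (Suc 0) t = 2 * lam * t"
| "gegenbauer lam (Suc (Suc l)) t =
     (2 * t * (real l + 1 + lam) * gegenbauer lam (Suc l) t
      - (real l + 2 * lam) * gegenbauer lam l t) / (real l + 2)"

text \<open>Rotation-invariant surface measure on the unit sphere of R^(n+1) = real^'n,
  realised as (n+1) times the push-forward of Lebesgue measure on the unit ball
  under radial projection x / |x| (cone measure = surface measure).\<close>
definition sphere_measure :: "(real ^ 'n) measure" where
  "sphere_measure =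
     scale_measure (ennreal (real CARD('n)))
       (distr (restrict_space lborel (ball 0 1)) borel (\<lambda>x. x /\<^sub>R norm x))"

definition laplacian :: "(real ^ 'n \<Rightarrow> real) \<Rightarrow> real ^ 'n \<Rightarrow> real" where
  "laplacian F x = (\<Sum>i\<in>Basis. deriv (deriv (\<lambda>t. F (x + t *\<^sub>R i))) 0)"

definition laplace_beltrami :: "(real ^ 'n \<Rightarrow> real) \<Rightarrow> real ^ 'n \<Rightarrow> real" where
  "laplace_beltrami f x = laplacian (\<lambda>y. f (y /\<^sub>R norm y)) x"

definition var_S :: "(real ^ 'n \<Rightarrow> real) \<Rightarrow> real" where
  "var_S f = ((\<integral>x. (f x)\<^sup>2 \<partial>sphere_measure)
              / norm (\<integral>x. (f x)\<^sup>2 *\<^sub>R x \<partial>sphere_measure))\<^sup>2 - 1"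

definition var_M :: "(real ^ 'n \<Rightarrow> real) \<Rightarrow> real" where
  "var_M f = - (\<integral>x. laplace_beltrami f x * f x \<partial>sphere_measure)
              / (\<integral>x. (f x)\<^sup>2 \<partial>sphere_measure)"

end

theory Submission
  imports Defs
begin

(*
  Everything is reduced to one-variable moment computations. Rotation invariance of the sphere
  measure shows that the moments mu_k of x \<bullet> e vanish for odd k and satisfy
  (k + 2 lam + 2) mu_(k+2) = (k + 1) mu_k, and that the vector integral of f(x \<bullet> e) x points
  along e. The integral of a zonal polynomial p(x \<bullet> e) is then the moment functional
  L p = \<Sum>k coeff p k * mu_k. On zonal polynomials the Laplace-Beltrami operator acts as the
  Gegenbauer operator D p = (1 - t\<^sup>2) p'' - (2 lam + 1) t p'. The moment recurrence alone makes D
  symmetric for L, so its eigenvectors, the Gegenbauer polynomials, are L-orthogonal, and the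
  three-term recurrence gives their L-norms. Then L(\<Phi>\<^sup>2), L(t \<Phi>\<^sup>2) and L((D \<Phi>) \<Phi>) are
  explicit sums with closed forms, and both variances are quotients of them.
*)

section \<open>Invariance of Lebesgue measure under orthogonal maps\<close>

text \<open>The change of variables theorems of HOL-Analysis are stated for index types of class
  \<^class>\<open>wellorder\<close>; a copy of an arbitrary finite index type, ordered by \<^const>\<open>to_nat\<close>,
  transfers them.\<close>

typedef 'a wellordered = "UNIV :: 'a set" by auto

instance wellordered :: (finite) finite
proof
  have "UNIV = range (Abs_wellordered :: 'a \<Rightarrow> _)"
    by (metis Rep_wellordered_inverse surj_def)
  then show "finite (UNIV :: 'a wellordered set)" by (metis finite finite_imageI)
qed

instantiation wellordered :: (finite) linorder
begin
definition less_eq_wellordered :: "'a wellordered \<Rightarrow> 'a wellordered \<Rightarrow> bool" where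
  "x \<le> y \<longleftrightarrow> to_nat (Rep_wellordered x) \<le> to_nat (Rep_wellordered y)"
definition less_wellordered :: "'a wellordered \<Rightarrow> 'a wellordered \<Rightarrow> bool" where
  "x < y \<longleftrightarrow> to_nat (Rep_wellordered x) < to_nat (Rep_wellordered y)"
instance
proof
  fix x y z :: "'a wellordered"
  show "(x < y) = (x \<le> y \<and> \<not> y \<le> x)" by (auto simp: less_eq_wellordered_def less_wellordered_def)
  show "x \<le> x" by (simp add: less_eq_wellordered_def)
  show "x \<le> y \<Longrightarrow> y \<le> z \<Longrightarrow> x \<le> z" by (simp add: less_eq_wellordered_def)
  show "x \<le> y \<Longrightarrow> y \<le> x \<Longrightarrow> x = y"
    by (simp add: less_eq_wellordered_def Rep_wellordered_inject)
  show "x \<le> y \<or> y \<le> x" by (auto simp: less_eq_wellordered_def)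
qed
end

instance wellordered :: (finite) wellorder
proof
  fix P :: "'a wellordered \<Rightarrow> bool" and a :: "'a wellordered"
  assume step: "\<And>x. (\<And>y. y < x \<Longrightarrow> P y) \<Longrightarrow> P x"
  have "P x" if "to_nat (Rep_wellordered x) = n" for n x
    using that
  proof (induction n arbitrary: x rule: less_induct)
    case (less n)
    show ?case by (rule step) (use less in \<open>auto simp: less_wellordered_def\<close>)
  qed
  then show "P a" by blast
qed

definition reindex_vec :: "('a \<Rightarrow> 'b) \<Rightarrow> real ^ 'b \<Rightarrow> real ^ 'a" where
  "reindex_vec \<phi> y = (\<chi> i. y $ \<phi> i)"

lemma reindex_vec_nth [simp]: "reindex_vec \<phi> y $ i = y $ \<phi> i"
  by (simp add: reindex_vec_def)

lemma linear_reindex_vec: "linear (reindex_vec \<phi>)"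
  by (auto simp: linear_iff vec_eq_iff)

lemma borel_measurable_reindex_vec [measurable]: "reindex_vec \<phi> \<in> borel_measurable borel"
  unfolding reindex_vec_def by (intro borel_measurable_continuous_onI continuous_intros)

lemma inner_reindex_vec:
  assumes "bij \<phi>"
  shows "reindex_vec \<phi> x \<bullet> reindex_vec \<phi> y = x \<bullet> y"
  using sum.reindex_bij_betw[OF assms, of "\<lambda>i. x $ i * y $ i"] by (simp add: inner_vec_def)

lemma orthogonal_transformation_reindex_vec:
  assumes "bij \<phi>"
  shows "orthogonal_transformation (reindex_vec \<phi>)"
  by (simp add: orthogonal_transformation_def linear_reindex_vec inner_reindex_vec[OF assms])

lemma prod_Basis_vec: "(\<Prod>b\<in>Basis. f b) = (\<Prod>i\<in>UNIV. f (axis i (1::real)))"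
proof -
  have B: "Basis = range (\<lambda>i. axis i (1::real))" by (auto simp: Basis_vec_def)
  show ?thesis unfolding B by (subst prod.reindex) (auto simp: inj_on_def axis_eq_axis)
qed

lemma lborel_distr_reindex_vec:
  fixes \<phi> :: "'a::finite \<Rightarrow> 'b::finite"
  assumes bij: "bij \<phi>"
  shows "distr lborel borel (reindex_vec \<phi>) = lborel"
proof (rule lborel_eqI[symmetric])
  fix l u :: "real ^ 'a"
  assume le: "\<And>b. b \<in> Basis \<Longrightarrow> l \<bullet> b \<le> u \<bullet> b"
  let ?l = "reindex_vec (inv \<phi>) l" and ?u = "reindex_vec (inv \<phi>) u"
  have box: "reindex_vec \<phi> -` box l u = box ?l ?u"
  proof -
    have "(\<forall>i. l $ i < y $ \<phi> i \<and> y $ \<phi> i < u $ i) \<longleftrightarrow>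
        (\<forall>j. l $ inv \<phi> j < y $ j \<and> y $ j < u $ inv \<phi> j)" for y :: "real ^ 'b"
      by (metis bij bij_inv_eq_iff)
    then show ?thesis by (auto simp: mem_box_cart)
  qed
  have le': "?l \<bullet> b \<le> ?u \<bullet> b" if "b \<in> Basis" for b
  proof -
    obtain j where b: "b = axis j 1" using \<open>b \<in> Basis\<close> by (auto simp: Basis_vec_def)
    have "l \<bullet> axis (inv \<phi> j) 1 \<le> u \<bullet> axis (inv \<phi> j) 1"
      by (rule le) (auto simp: Basis_vec_def)
    then show ?thesis by (simp add: b inner_axis)
  qed
  have "emeasure (distr lborel borel (reindex_vec \<phi>)) (box l u) = emeasure lborel (box ?l ?u)"
    by (simp add: emeasure_distr box)
  also have "\<dots> = (\<Prod>b\<in>Basis. (?u - ?l) \<bullet> b)"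
    using le' by (simp add: emeasure_lborel_box_eq)
  also have "(\<Prod>b\<in>Basis. (?u - ?l) \<bullet> b) = (\<Prod>b\<in>Basis. (u - l) \<bullet> b)"
  proof -
    have "(\<Prod>j\<in>UNIV. u $ inv \<phi> j - l $ inv \<phi> j) = (\<Prod>i\<in>UNIV. u $ i - l $ i)"
      using prod.reindex_bij_betw[of "inv \<phi>" UNIV UNIV "\<lambda>i. u $ i - l $ i"] bij
      by (simp add: bij_imp_bij_inv)
    then show ?thesis by (simp add: prod_Basis_vec inner_axis)
  qed
  finally show "emeasure (distr lborel borel (reindex_vec \<phi>)) (box l u) = (\<Prod>b\<in>Basis. (u - l) \<bullet> b)"
    by (simp add: prod_ennreal)
qed simp

lemma borel_measurable_orthogonal_transformation:
  fixes T :: "'a::euclidean_space \<Rightarrow> 'a"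
  assumes "orthogonal_transformation T"
  shows "T \<in> borel_measurable borel"
  using orthogonal_transformation_linear[OF assms]
  by (intro borel_measurable_continuous_onI linear_continuous_on linear_conv_bounded_linear[THEN iffD1])

lemma lborel_distr_orthogonal_transformation_wellorder:
  fixes T :: "(real, 'm::{finite,wellorder}) vec \<Rightarrow> (real, 'm) vec"
  assumes T: "orthogonal_transformation T"
  shows "distr lborel borel T = lborel"
proof (rule lborel_eqI[symmetric])
  fix l u :: "(real, 'm) vec"
  assume le: "\<And>b. b \<in> Basis \<Longrightarrow> l \<bullet> b \<le> u \<bullet> b"
  let ?S = "box l u"
  have meas: "T \<in> borel_measurable borel"
    using T by (rule borel_measurable_orthogonal_transformation)
  have T_inv: "orthogonal_transformation (inv T)"
    using T orthogonal_transformation_inv by blast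
  have pre: "T -` ?S = inv T ` ?S"
    using T orthogonal_transformation_bij bij_vimage_eq_inv_image by blast
  have S: "?S \<in> lmeasurable" by simp
  have "emeasure (distr lborel borel T) ?S = emeasure lebesgue (T -` ?S)"
    using measurable_sets_borel[OF meas, of ?S] by (simp add: emeasure_distr meas)
  also have "\<dots> = ennreal (measure lebesgue (inv T ` ?S))"
    using measurable_orthogonal_image[OF T_inv S] pre by (simp add: emeasure_eq_measure2)
  also have "\<dots> = emeasure lborel ?S"
    using measure_orthogonal_image[OF T_inv S] S by (simp add: emeasure_eq_measure2)
  finally show "emeasure (distr lborel borel T) ?S = (\<Prod>b\<in>Basis. (u - l) \<bullet> b)"
    using le by (simp add: emeasure_lborel_box_eq)
qed simp

lemma lborel_distr_orthogonal_transformation: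
  fixes T :: "real ^ 'n \<Rightarrow> real ^ 'n"
  assumes T: "orthogonal_transformation T"
  shows "distr lborel borel T = lborel"
proof -
  let ?\<iota> = "reindex_vec (Rep_wellordered :: 'n wellordered \<Rightarrow> 'n)"
  let ?\<kappa> = "reindex_vec (Abs_wellordered :: 'n \<Rightarrow> 'n wellordered)"
  have bij_Abs: "bij (Abs_wellordered :: 'n \<Rightarrow> 'n wellordered)"
    by (metis Abs_wellordered_inverse Rep_wellordered_inverse UNIV_I bij_betw_byWitness subset_UNIV)
  have bij_Rep: "bij (Rep_wellordered :: 'n wellordered \<Rightarrow> 'n)"
    by (metis Abs_wellordered_inverse Rep_wellordered_inverse UNIV_I bij_betw_byWitness subset_UNIV)
  have \<kappa>: "distr lborel borel ?\<kappa> = lborel"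
    using lborel_distr_reindex_vec[OF bij_Abs] .
  define T' where "T' = ?\<iota> \<circ> T \<circ> ?\<kappa>"
  have T': "orthogonal_transformation T'"
    unfolding T'_def using T orthogonal_transformation_reindex_vec[OF bij_Abs]
      orthogonal_transformation_reindex_vec[OF bij_Rep]
    by (intro orthogonal_transformation_compose)
  have conj: "T \<circ> ?\<kappa> = ?\<kappa> \<circ> T'"
    by (auto simp: T'_def vec_eq_iff Abs_wellordered_inverse)
  have [measurable]: "T \<in> borel_measurable borel" "T' \<in> borel_measurable borel"
    using T T' by (auto intro: borel_measurable_orthogonal_transformation)
  have "distr lborel borel T = distr lborel borel (T \<circ> ?\<kappa>)"
    by (subst \<kappa>[symmetric]) (simp add: distr_distr)
  also have "\<dots> = distr (distr lborel borel T') borel ?\<kappa>"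
    by (simp add: conj distr_distr)
  also have "\<dots> = lborel"
    by (simp add: lborel_distr_orthogonal_transformation_wellorder[OF T'] \<kappa>)
  finally show ?thesis .
qed

section \<open>The sphere measure\<close>

lemma scale_measure_eq_density:
  assumes "r \<ge> 0"
  shows "scale_measure (ennreal r) M = density M (\<lambda>_. ennreal r)"
proof (rule measure_eqI)
  fix A assume "A \<in> sets (scale_measure (ennreal r) M)"
  then show "emeasure (scale_measure (ennreal r) M) A = emeasure (density M (\<lambda>_. ennreal r)) A"
    by (simp add: emeasure_density nn_integral_cmult_indicator)
qed simp

lemma sphere_measure_eq_density:
  "(sphere_measure :: (real ^ 'n) measure) =
     density (distr (restrict_space lborel (ball 0 1)) borel sgn) (\<lambda>_. ennreal (real CARD('n)))"
  unfolding sphere_measure_def sgn_div_norm[symmetric]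
  by (rule scale_measure_eq_density) simp

lemma sets_sphere_measure [measurable_cong]: "sets (sphere_measure :: (real ^ 'n) measure) = sets borel"
  by (simp add: sphere_measure_eq_density)

lemma measurable_sgn_ball: "sgn \<in> measurable (restrict_space lborel (ball (0::real ^ 'n) 1)) borel"
  by (rule measurable_restrict_space1) simp

lemma integral_sphere_measure:
  fixes f :: "real ^ 'n \<Rightarrow> 'b::{banach,second_countable_topology}"
  assumes f [measurable]: "f \<in> borel_measurable borel"
  shows "integral\<^sup>L sphere_measure f =
           real CARD('n) *\<^sub>R (\<integral>x. indicator (ball 0 1) x *\<^sub>R f (sgn x) \<partial>lborel)"
proof -
  have "integral\<^sup>L sphere_measure f =
      real CARD('n) *\<^sub>R (\<integral>x. f x \<partial>distr (restrict_space lborel (ball 0 1)) borel sgn)"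
    unfolding sphere_measure_eq_density by (subst integral_density) (auto intro: measurable_sgn_ball)
  also have "(\<integral>x. f x \<partial>distr (restrict_space lborel (ball 0 1)) borel sgn) =
      (\<integral>x. f (sgn x) \<partial>restrict_space lborel (ball 0 1))"
    by (rule integral_distr[OF measurable_sgn_ball f])
  also have "\<dots> = (\<integral>x. indicator (ball 0 1) x *\<^sub>R f (sgn x) \<partial>lborel)"
    by (rule integral_restrict_space) simp
  finally show ?thesis .
qed

lemma integrable_sphere_measure_continuous:
  fixes f :: "real ^ 'n \<Rightarrow> 'b::{banach,second_countable_topology}"
  assumes f: "continuous_on UNIV f"
  shows "integrable sphere_measure f"
proof -
  have [measurable]: "f \<in> borel_measurable borel"
    using f by (rule borel_measurable_continuous_onI)
  have "compact (f ` cball 0 1)"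
    by (rule compact_continuous_image) (use f continuous_on_subset in auto)
  then obtain B where B: "\<And>y. y \<in> f ` cball 0 1 \<Longrightarrow> norm y \<le> B"
    by (meson bounded_iff compact_imp_bounded)
  have "integrable lborel (\<lambda>x. indicator (ball (0::real ^ 'n) 1) x *\<^sub>R f (sgn x))"
  proof (rule integrableI_bounded_set_indicator[where B = B])
    show "emeasure lborel (ball (0::real ^ 'n) 1) < \<infinity>"
      by (rule emeasure_bounded_finite) simp
    show "AE x in lborel. x \<in> ball 0 1 \<longrightarrow> norm (f (sgn x)) \<le> B"
      by (intro AE_I2 impI B) (auto simp: norm_sgn)
  qed auto
  then have "integrable (restrict_space lborel (ball 0 1)) (\<lambda>x. f (sgn x))"
    by (subst integrable_restrict_space) simp_all
  then have "integrable (distr (restrict_space lborel (ball 0 1)) borel sgn) f"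
    by (subst integrable_distr_eq[OF measurable_sgn_ball]) simp_all
  then show ?thesis
    unfolding sphere_measure_eq_density by (subst integrable_density) (auto intro: measurable_sgn_ball)
qed

lemma borel_measurable_sphere_measure_continuous:
  fixes f :: "real ^ 'n \<Rightarrow> 'b::{banach,second_countable_topology}"
  assumes "continuous_on UNIV f"
  shows "f \<in> borel_measurable sphere_measure"
  using borel_measurable_continuous_onI[OF assms] by simp

lemma AE_sphere_measure_norm: "AE x in (sphere_measure :: (real ^ 'n) measure). norm x = 1"
proof -
  have "AE x in restrict_space lborel (ball (0::real ^ 'n) 1). x \<noteq> 0"
  proof (subst AE_restrict_space_iff)
    show "AE x in lborel. x \<in> ball 0 1 \<longrightarrow> x \<noteq> 0"
      using AE_lborel_singleton[of 0] by eventually_elim auto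
  qed simp
  then have "AE x in restrict_space lborel (ball (0::real ^ 'n) 1). norm (sgn x) = 1"
    by eventually_elim (simp add: norm_sgn)
  then have "AE x in distr (restrict_space lborel (ball (0::real ^ 'n) 1)) borel sgn. norm x = 1"
    by (subst AE_distr_iff[OF measurable_sgn_ball]) auto
  then show ?thesis
    unfolding sphere_measure_eq_density by (subst AE_density) auto
qed

lemma integral_sphere_measure_orthogonal_transformation:
  fixes f :: "real ^ 'n \<Rightarrow> 'b::{banach,second_countable_topology}"
    and T :: "real ^ 'n \<Rightarrow> real ^ 'n"
  assumes f [measurable]: "f \<in> borel_measurable borel"
    and T: "orthogonal_transformation T"
  shows "(\<integral>x. f (T x) \<partial>sphere_measure) = integral\<^sup>L sphere_measure f"
proof -
  have [measurable]: "T \<in> borel_measurable borel" "ball (0::real ^ 'n) 1 \<in> sets borel"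
    using T by (simp_all add: borel_measurable_orthogonal_transformation)
  have norm_T: "norm (T x) = norm x" for x
    using T orthogonal_transformation_norm by blast
  have sgn_T: "T (sgn x) = sgn (T x)" for x
    using T by (simp add: sgn_div_norm norm_T orthogonal_transformation_scaleR)
  have "(\<integral>x. f (T x) \<partial>sphere_measure) =
     real CARD('n) *\<^sub>R (\<integral>x. indicator (ball 0 1) (T x) *\<^sub>R f (sgn (T x)) \<partial>lborel)"
    by (subst integral_sphere_measure) (simp_all add: sgn_T indicator_def norm_T)
  also have "(\<integral>x. indicator (ball 0 1) (T x) *\<^sub>R f (sgn (T x)) \<partial>lborel) =
      (\<integral>y. indicator (ball 0 1) y *\<^sub>R f (sgn y) \<partial>distr lborel borel T)"
    by (rule integral_distr[symmetric]) measurable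
  also have "real CARD('n) *\<^sub>R \<dots> = integral\<^sup>L sphere_measure f"
    by (simp add: lborel_distr_orthogonal_transformation[OF T] integral_sphere_measure)
  finally show ?thesis .
qed

section \<open>Moments of zonal functions\<close>

lemma orthogonal_transformation_reflection:
  fixes v :: "'a::real_inner"
  assumes "norm v = 1"
  shows "orthogonal_transformation (\<lambda>x. x - (2 * (x \<bullet> v)) *\<^sub>R v)"
proof -
  have "v \<bullet> v = 1" using assms by (simp add: norm_eq_1)
  then show ?thesis
    unfolding orthogonal_transformation_def
    by (auto simp: linear_iff inner_simps algebra_simps inner_commute)
qed

definition plane_rotation :: "'a::real_inner \<Rightarrow> 'a \<Rightarrow> real \<Rightarrow> real \<Rightarrow> 'a \<Rightarrow> 'a" where
  "plane_rotation e b c s x =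
     x + ((c - 1) * (x \<bullet> e) - s * (x \<bullet> b)) *\<^sub>R e + (s * (x \<bullet> e) + (c - 1) * (x \<bullet> b)) *\<^sub>R b"

lemma orthogonal_transformation_plane_rotation:
  fixes e b :: "'a::real_inner"
  assumes e: "norm e = 1" and b: "norm b = 1" and eb: "e \<bullet> b = 0" and cs: "c\<^sup>2 + s\<^sup>2 = 1"
  shows "orthogonal_transformation (plane_rotation e b c s)"
  unfolding orthogonal_transformation_def
proof (intro conjI allI)
  show "linear (plane_rotation e b c s)"
    by (auto simp: linear_iff inner_simps algebra_simps plane_rotation_def)
  fix x y :: 'a
  have ee: "e \<bullet> e = 1" and bb: "b \<bullet> b = 1" and be: "b \<bullet> e = 0"
    using e b eb by (simp_all add: norm_eq_1 inner_commute)
  define u v u' v' where uv_defs: "u = x \<bullet> e" "v = x \<bullet> b" "u' = y \<bullet> e" "v' = y \<bullet> b"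
  have "plane_rotation e b c s x \<bullet> plane_rotation e b c s y =
      x \<bullet> y + ((c - 1) * u - s * v) * u' + (s * u + (c - 1) * v) * v'
       + ((c - 1) * u' - s * v') * u + ((c - 1) * u - s * v) * ((c - 1) * u' - s * v')
       + (s * u' + (c - 1) * v') * v + (s * u + (c - 1) * v) * (s * u' + (c - 1) * v')"
    unfolding plane_rotation_def uv_defs
    by (simp add: inner_simps ee bb eb be inner_commute algebra_simps)
  also have "\<dots> = x \<bullet> y + (c\<^sup>2 + s\<^sup>2 - 1) * (u * u' + v * v')"
    by (simp add: algebra_simps power2_eq_square)
  finally show "plane_rotation e b c s x \<bullet> plane_rotation e b c s y = x \<bullet> y"
    using cs by simp
qed

lemma inner_plane_rotation:
  fixes e b :: "'a::real_inner"
  assumes "norm e = 1" and "e \<bullet> b = 0"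
  shows "plane_rotation e b c s x \<bullet> e = c * (x \<bullet> e) - s * (x \<bullet> b)"
  using assms
  by (simp add: plane_rotation_def inner_simps norm_eq_1 inner_commute algebra_simps)

definition sphere_moment :: "real ^ 'n \<Rightarrow> nat \<Rightarrow> real" where
  "sphere_moment e k = (\<integral>x. (x \<bullet> e) ^ k \<partial>sphere_measure)"

lemma sphere_moment_0_pos:
  fixes e :: "real ^ 'n"
  shows "sphere_moment e 0 > 0"
proof -
  have "sphere_moment e 0 =
      real CARD('n) *\<^sub>R (\<integral>x. indicator (ball (0::real ^ 'n) 1) x *\<^sub>R (1::real) \<partial>lborel)"
    unfolding sphere_moment_def by (subst integral_sphere_measure) simp_all
  also have "\<dots> = real CARD('n) * measure lborel (ball (0::real ^ 'n) 1)"
    by simp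
  finally show ?thesis
    by simp
qed

lemma sphere_moment_odd:
  assumes "odd k"
  shows "sphere_moment e k = 0"
proof -
  have "sphere_moment e k = (\<integral>x. ((- x) \<bullet> e) ^ k \<partial>sphere_measure)"
    unfolding sphere_moment_def
    by (rule integral_sphere_measure_orthogonal_transformation[symmetric])
       (auto intro: borel_measurable_continuous_onI continuous_intros
         orthogonal_transformation_neg[of "\<lambda>x. x", simplified])
  also have "\<dots> = - sphere_moment e k"
    using assms by (simp add: sphere_moment_def power_minus_odd)
  finally show ?thesis by simp
qed

lemma integral_zonal_times_orthogonal:
  fixes e v :: "real ^ 'n" and g :: "real \<Rightarrow> real"
  assumes g: "continuous_on UNIV g" and ve: "v \<bullet> e = 0"
  shows "(\<integral>x. g (x \<bullet> e) * (x \<bullet> v) \<partial>sphere_measure) = 0"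
proof (cases "v = 0")
  case False
  define w where "w = v /\<^sub>R norm v"
  have w: "norm w = 1" using False by (simp add: w_def)
  let ?R = "\<lambda>x. x - (2 * (x \<bullet> w)) *\<^sub>R w"
  have v_w: "v = norm v *\<^sub>R w" using False by (simp add: w_def)
  have "?R x \<bullet> e = x \<bullet> e" for x
    using ve by (simp add: w_def inner_simps)
  moreover have "?R x \<bullet> v = - (x \<bullet> v)" for x
    using w by (subst (1 2) v_w) (simp add: inner_simps norm_eq_1 algebra_simps)
  ultimately have "(\<integral>x. g (x \<bullet> e) * (x \<bullet> v) \<partial>sphere_measure) =
      (\<integral>x. - (g (x \<bullet> e) * (x \<bullet> v)) \<partial>sphere_measure)"
    using integral_sphere_measure_orthogonal_transformation
      [OF _ orthogonal_transformation_reflection[OF w], of "\<lambda>x. g (x \<bullet> e) * (x \<bullet> v)"]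
    by (simp add: borel_measurable_continuous_onI continuous_on_compose2[OF g] continuous_intros)
  then show ?thesis by simp
qed simp

lemma integral_zonal_scaleR:
  fixes e :: "real ^ 'n" and g :: "real \<Rightarrow> real"
  assumes e: "norm e = 1" and g: "continuous_on UNIV g"
  shows "(\<integral>x. g (x \<bullet> e) *\<^sub>R x \<partial>sphere_measure) = (\<integral>x. g (x \<bullet> e) * (x \<bullet> e) \<partial>sphere_measure) *\<^sub>R e"
    (is "?W = ?Z")
proof -
  have ge: "continuous_on UNIV (\<lambda>x::real ^ 'n. g (x \<bullet> e))"
    by (intro continuous_on_compose2[OF g] continuous_intros) auto
  have "?W \<bullet> y = ?Z \<bullet> y" for y
  proof -
    define v where "v = y - (y \<bullet> e) *\<^sub>R e"
    have ve: "v \<bullet> e = 0"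
      using e by (simp add: v_def inner_simps norm_eq_1 inner_commute)
    have "x \<bullet> y = (y \<bullet> e) * (x \<bullet> e) + x \<bullet> v" for x
      by (simp add: v_def inner_simps)
    then have "?W \<bullet> y = (\<integral>x. (y \<bullet> e) * (g (x \<bullet> e) * (x \<bullet> e)) + g (x \<bullet> e) * (x \<bullet> v) \<partial>sphere_measure)"
      by (subst integral_inner_left[symmetric])
         (auto intro!: integrable_sphere_measure_continuous continuous_intros ge simp: algebra_simps)
    also have "\<dots> = (y \<bullet> e) * (\<integral>x. g (x \<bullet> e) * (x \<bullet> e) \<partial>sphere_measure)"
      by (subst Bochner_Integration.integral_add)
         (auto intro!: integrable_sphere_measure_continuous continuous_intros ge
           simp: integral_zonal_times_orthogonal[OF g ve])
    finally show ?thesis by (simp add: inner_commute)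
  qed
  then have "(?W - ?Z) \<bullet> (?W - ?Z) = 0" by (simp add: inner_diff)
  then show ?thesis by simp
qed

lemma integral_power_inner_combination:
  fixes e b :: "real ^ 'n"
  assumes e: "norm e = 1" and b: "norm b = 1" and eb: "e \<bullet> b = 0"
  shows "(\<integral>x. (x \<bullet> e - s * (x \<bullet> b)) ^ (2 * p) \<partial>sphere_measure) =
    (1 + s\<^sup>2) ^ p * sphere_moment e (2 * p)"
proof -
  define r where "r = sqrt (1 + s\<^sup>2)"
  have r: "r > 0" and r2: "r\<^sup>2 = 1 + s\<^sup>2"
    by (simp_all add: r_def add_pos_nonneg)
  let ?R = "plane_rotation e b (1 / r) (s / r)"
  have "(1 / r)\<^sup>2 + (s / r)\<^sup>2 = 1"
    using r by (simp add: power_divide add_divide_distrib[symmetric] r2[symmetric])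
  then have R: "orthogonal_transformation ?R"
    by (rule orthogonal_transformation_plane_rotation[OF e b eb])
  have "x \<bullet> e - s * (x \<bullet> b) = r * (?R x \<bullet> e)" for x
    using r by (simp add: inner_plane_rotation[OF e eb] right_diff_distrib)
  then have "(x \<bullet> e - s * (x \<bullet> b)) ^ (2 * p) = (1 + s\<^sup>2) ^ p * (?R x \<bullet> e) ^ (2 * p)" for x
    by (simp add: power_mult_distrib power_mult r2[symmetric])
  then have "(\<integral>x. (x \<bullet> e - s * (x \<bullet> b)) ^ (2 * p) \<partial>sphere_measure) =
      (1 + s\<^sup>2) ^ p * (\<integral>x. (?R x \<bullet> e) ^ (2 * p) \<partial>sphere_measure)"
    by simp
  also have "(\<integral>x. (?R x \<bullet> e) ^ (2 * p) \<partial>sphere_measure) = sphere_moment e (2 * p)"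
    unfolding sphere_moment_def
    by (rule integral_sphere_measure_orthogonal_transformation[OF _ R])
       (intro borel_measurable_continuous_onI continuous_intros)
  finally show ?thesis .
qed

lemma coeff_one_plus_X2_power:
  "coeff ([:1, 0, 1:] ^ p) 0 = (1::real) \<and> coeff ([:1, 0, 1:] ^ p) 2 = (real p :: real)"
proof (induction p)
  case (Suc p)
  have "[:1, 0, 1:] ^ Suc p = [:1, 0, 1:] ^ p + pCons 0 (pCons 0 ([:1, 0, 1:] ^ p :: real poly))"
    by (simp add: mult_pCons_left algebra_simps)
  then show ?case using Suc by (simp add: coeff_pCons numeral_2_eq_2)
qed simp

text \<open>Compare the coefficients of \<open>s\<^sup>2\<close> on both sides of
  \<open>integral_power_inner_combination\<close>, the left side expanded binomially.\<close>

lemma integral_inner_power_orthonormal_sq: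
  fixes e b :: "real ^ 'n"
  assumes e: "norm e = 1" and b: "norm b = 1" and eb: "e \<bullet> b = 0"
  shows "(2 * real p + 1) * (\<integral>x. (x \<bullet> e) ^ (2 * p) * (x \<bullet> b)\<^sup>2 \<partial>sphere_measure) =
    sphere_moment e (2 * p + 2)"
proof -
  define n where "n = 2 * Suc p"
  define a where
    "a k = real (n choose k) * (-1) ^ k * (\<integral>x. (x \<bullet> b) ^ k * (x \<bullet> e) ^ (n - k) \<partial>sphere_measure)"
    for k
  have expand: "(\<integral>x. (x \<bullet> e - s * (x \<bullet> b)) ^ n \<partial>sphere_measure) = (\<Sum>k\<le>n. a k * s ^ k)" for s
  proof -
    have "(x \<bullet> e - s * (x \<bullet> b)) ^ n =
        (\<Sum>k\<le>n. (real (n choose k) * (-1) ^ k * s ^ k) * ((x \<bullet> b) ^ k * (x \<bullet> e) ^ (n - k)))" for x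
      unfolding diff_conv_add_uminus add.commute[of "x \<bullet> e"] binomial_ring
      by (intro sum.cong refl)
         (simp only: minus_mult_left power_mult_distrib[of "- s"] power_minus[of s] mult_ac)
    then show ?thesis
      by (simp add: a_def Bochner_Integration.integral_sum integrable_sphere_measure_continuous
          continuous_intros sum_distrib_right mult_ac)
  qed
  have "poly (\<Sum>k\<le>n. monom (a k) k) s = poly (smult (sphere_moment e n) ([:1, 0, 1:] ^ Suc p)) s" for s
  proof -
    have "poly (\<Sum>k\<le>n. monom (a k) k) s = (\<integral>x. (x \<bullet> e - s * (x \<bullet> b)) ^ n \<partial>sphere_measure)"
      by (simp add: poly_sum poly_monom expand)
    also have "\<dots> = (1 + s\<^sup>2) ^ Suc p * sphere_moment e n"
      unfolding n_def by (rule integral_power_inner_combination[OF e b eb])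
    finally show ?thesis by (simp add: poly_power power2_eq_square algebra_simps)
  qed
  then have "(\<Sum>k\<le>n. monom (a k) k) = smult (sphere_moment e n) ([:1, 0, 1:] ^ Suc p)"
    by (simp add: poly_eq_poly_eq_iff[symmetric] fun_eq_iff)
  then have "coeff (\<Sum>k\<le>n. monom (a k) k) 2 = sphere_moment e n * real (Suc p)"
    using coeff_one_plus_X2_power[of "Suc p"] by simp
  moreover have "coeff (\<Sum>k\<le>n. monom (a k) k) 2 = a 2"
    by (simp add: coeff_sum coeff_monom n_def numeral_2_eq_2)
  moreover have "real (n choose 2) = real (Suc p) * (2 * real p + 1)"
    by (simp add: choose_two n_def algebra_simps)
  ultimately have "real (Suc p) *
      ((2 * real p + 1) * (\<integral>x. (x \<bullet> b)\<^sup>2 * (x \<bullet> e) ^ (2 * p) \<partial>sphere_measure)) =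
      real (Suc p) * sphere_moment e n"
    by (simp add: a_def n_def algebra_simps)
  then show ?thesis by (simp add: n_def mult.commute)
qed

lemma integral_inner_power_orthogonal_sq:
  fixes e b :: "real ^ 'n"
  assumes e: "norm e = 1" and eb: "e \<bullet> b = 0" and k: "even k"
  shows "(real k + 1) * (\<integral>x. (x \<bullet> e) ^ k * (x \<bullet> b)\<^sup>2 \<partial>sphere_measure) =
    (norm b)\<^sup>2 * sphere_moment e (k + 2)"
proof (cases "b = 0")
  case False
  define b' where "b' = b /\<^sub>R norm b"
  have b': "norm b' = 1" and eb': "e \<bullet> b' = 0"
    using False eb by (simp_all add: b'_def)
  obtain p where p: "k = 2 * p" using k by blast
  have "(x \<bullet> b)\<^sup>2 = (norm b)\<^sup>2 * (x \<bullet> b')\<^sup>2" for x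
    using False by (simp add: b'_def power_mult_distrib field_simps)
  then have "(\<lambda>x. (x \<bullet> e) ^ k * (x \<bullet> b)\<^sup>2) = (\<lambda>x. (norm b)\<^sup>2 * ((x \<bullet> e) ^ k * (x \<bullet> b')\<^sup>2))"
    by (simp add: mult.left_commute)
  then have "(\<integral>x. (x \<bullet> e) ^ k * (x \<bullet> b)\<^sup>2 \<partial>sphere_measure) =
      (norm b)\<^sup>2 * (\<integral>x. (x \<bullet> e) ^ k * (x \<bullet> b')\<^sup>2 \<partial>sphere_measure)"
    by simp
  then show ?thesis
    using integral_inner_power_orthonormal_sq[OF e b' eb', of p] by (simp add: p mult.left_commute)
qed simp

lemma power2_norm_eq_inner_plus_perp:
  fixes e x :: "real ^ 'n"
  assumes "norm e = 1"
  shows "(norm x)\<^sup>2 = (x \<bullet> e)\<^sup>2 + (\<Sum>i\<in>Basis. (x \<bullet> (i - (e \<bullet> i) *\<^sub>R e))\<^sup>2)"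
proof -
  have "(\<Sum>i\<in>Basis. (x \<bullet> (i - (e \<bullet> i) *\<^sub>R e))\<^sup>2) =
      (\<Sum>i\<in>Basis. (x \<bullet> i) * (x \<bullet> i)) - 2 * (x \<bullet> e) * (\<Sum>i\<in>Basis. (x \<bullet> i) * (e \<bullet> i))
       + (x \<bullet> e)\<^sup>2 * (\<Sum>i\<in>Basis. (e \<bullet> i) * (e \<bullet> i))"
    by (simp add: inner_simps power2_eq_square algebra_simps sum.distrib sum_subtractf sum_distrib_left)
  also have "\<dots> = x \<bullet> x - (x \<bullet> e)\<^sup>2"
    using assms by (simp add: euclidean_inner[symmetric] norm_eq_1 power2_eq_square)
  finally show ?thesis by (simp add: power2_norm_eq_inner)
qed

text \<open>Integrate \<open>(x \<bullet> e)\<^sup>k \<parallel>x\<parallel>\<^sup>2 = (x \<bullet> e)\<^sup>k\<^sup>+\<^sup>2 + \<Sum>\<^sub>i (x \<bullet> e)\<^sup>k (x \<bullet> b\<^sub>i)\<^sup>2\<close>,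
  where the projections \<open>b\<^sub>i\<close> of the basis vectors onto \<open>e\<^sup>\<bottom>\<close> satisfy
  \<open>\<Sum>\<^sub>i \<parallel>b\<^sub>i\<parallel>\<^sup>2 = n - 1\<close>.\<close>

lemma sphere_moment_recurrence:
  fixes e :: "real ^ 'n"
  assumes e: "norm e = 1" and k: "even k"
  shows "sphere_moment e (k + 2) * (real k + real CARD('n)) = (real k + 1) * sphere_moment e k"
proof -
  define b where "b i = i - (e \<bullet> i) *\<^sub>R e" for i :: "real ^ 'n"
  have ee: "e \<bullet> e = 1" using e by (simp add: norm_eq_1)
  have eb: "e \<bullet> b i = 0" for i by (simp add: b_def inner_simps ee)
  have "sphere_moment e k = (\<integral>x. (x \<bullet> e) ^ k * (norm x)\<^sup>2 \<partial>sphere_measure)"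
    unfolding sphere_moment_def
    by (rule integral_cong_AE)
       (use AE_sphere_measure_norm in
         \<open>auto intro!: borel_measurable_sphere_measure_continuous continuous_intros\<close>)
  also have "\<dots> = (\<integral>x. (x \<bullet> e) ^ (k + 2) + (\<Sum>i\<in>Basis. (x \<bullet> e) ^ k * (x \<bullet> b i)\<^sup>2) \<partial>sphere_measure)"
    unfolding power2_norm_eq_inner_plus_perp[OF e] b_def
    by (simp only: distrib_left sum_distrib_left power_add)
  also have "\<dots> = sphere_moment e (k + 2) + (\<Sum>i\<in>Basis. \<integral>x. (x \<bullet> e) ^ k * (x \<bullet> b i)\<^sup>2 \<partial>sphere_measure)"
    unfolding sphere_moment_def
    by (subst Bochner_Integration.integral_add)
       (auto intro!: integrable_sphere_measure_continuous continuous_intros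
         Bochner_Integration.integral_sum)
  finally have "(real k + 1) * sphere_moment e k = (real k + 1) * sphere_moment e (k + 2) +
      (\<Sum>i\<in>Basis. (norm (b i))\<^sup>2) * sphere_moment e (k + 2)"
    by (simp add: distrib_left sum_distrib_left sum_distrib_right
        integral_inner_power_orthogonal_sq[OF e eb k])
  moreover have "(\<Sum>i\<in>Basis. (norm (b i))\<^sup>2) = real CARD('n) - 1"
  proof -
    have "(norm (b i))\<^sup>2 = 1 - (e \<bullet> i)\<^sup>2" if "i \<in> Basis" for i
      using that unfolding power2_norm_eq_inner b_def
      by (simp add: inner_simps ee inner_commute power2_eq_square algebra_simps)
    moreover have "(\<Sum>i\<in>Basis. (e \<bullet> i)\<^sup>2) = 1"
      using ee by (simp add: euclidean_inner[of e e] power2_eq_square)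
    ultimately show ?thesis by (simp add: sum_subtractf)
  qed
  ultimately show ?thesis by (simp add: algebra_simps)
qed

section \<open>Moment functionals and the Gegenbauer operator\<close>

definition moment_functional :: "(nat \<Rightarrow> real) \<Rightarrow> real poly \<Rightarrow> real" where
  "moment_functional \<mu> p = (\<Sum>k\<le>degree p. coeff p k * \<mu> k)"

lemma moment_functional_eq_sum:
  "degree p \<le> n \<Longrightarrow> moment_functional \<mu> p = (\<Sum>k\<le>n. coeff p k * \<mu> k)"
  unfolding moment_functional_def by (rule sum.mono_neutral_left) (auto simp: coeff_eq_0)

lemma moment_functional_add:
  "moment_functional \<mu> (p + q) = moment_functional \<mu> p + moment_functional \<mu> q"
proof -
  define n where "n = max (degree p) (degree q)"
  have "degree (p + q) \<le> n" "degree p \<le> n" "degree q \<le> n"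
    by (auto simp: n_def intro: degree_add_le)
  then show ?thesis by (simp add: moment_functional_eq_sum[of _ n] sum.distrib algebra_simps)
qed

lemma moment_functional_smult: "moment_functional \<mu> (smult a p) = a * moment_functional \<mu> p"
  by (simp add: moment_functional_eq_sum[OF degree_smult_le] moment_functional_def
      sum_distrib_left mult_ac)

lemma moment_functional_0 [simp]: "moment_functional \<mu> 0 = 0"
  by (simp add: moment_functional_def)

lemma moment_functional_1 [simp]: "moment_functional \<mu> 1 = \<mu> 0"
  by (simp add: moment_functional_def)

lemma moment_functional_minus: "moment_functional \<mu> (- p) = - moment_functional \<mu> p"
  using moment_functional_smult[of \<mu> "-1" p] by simp

lemma moment_functional_diff:
  "moment_functional \<mu> (p - q) = moment_functional \<mu> p - moment_functional \<mu> q"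
  using moment_functional_add[of \<mu> p "- q"] by (simp add: moment_functional_minus)

lemma moment_functional_sum:
  "moment_functional \<mu> (\<Sum>i\<in>I. f i) = (\<Sum>i\<in>I. moment_functional \<mu> (f i))"
  by (induction I rule: infinite_finite_induct) (auto simp: moment_functional_add)

lemma moment_functional_monom: "moment_functional \<mu> (monom a n) = a * \<mu> n"
proof -
  have "moment_functional \<mu> (monom a n) = (\<Sum>k\<le>n. coeff (monom a n) k * \<mu> k)"
    by (rule moment_functional_eq_sum) (simp add: degree_monom_le)
  also have "\<dots> = (\<Sum>k\<le>n. if k = n then a * \<mu> n else 0)"
    by (rule sum.cong) (auto simp: coeff_monom)
  finally show ?thesis by simp
qed

definition X_poly :: "real poly" where
  "X_poly = monom 1 1"

lemma poly_X_poly [simp]: "poly X_poly t = t"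
  by (simp add: X_poly_def poly_monom)

lemma pderiv_X_poly [simp]: "pderiv X_poly = 1"
  by (simp add: X_poly_def pderiv_monom)

definition gegenbauer_operator :: "real \<Rightarrow> real poly \<Rightarrow> real poly" where
  "gegenbauer_operator lam p =
     pderiv (pderiv p) - X_poly * X_poly * pderiv (pderiv p) - smult (2 * lam + 1) (X_poly * pderiv p)"

lemma gegenbauer_operator_add:
  "gegenbauer_operator lam (p + q) = gegenbauer_operator lam p + gegenbauer_operator lam q"
  by (simp add: gegenbauer_operator_def pderiv_add distrib_left smult_add_right algebra_simps)

lemma gegenbauer_operator_smult:
  "gegenbauer_operator lam (smult a p) = smult a (gegenbauer_operator lam p)"
  by (simp add: gegenbauer_operator_def pderiv_smult smult_diff_right mult_smult_right
      mult_smult_left smult_smult mult.commute)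

lemma gegenbauer_operator_0 [simp]: "gegenbauer_operator lam 0 = 0"
  by (simp add: gegenbauer_operator_def)

lemma gegenbauer_operator_sum:
  "gegenbauer_operator lam (\<Sum>i\<in>I. f i) = (\<Sum>i\<in>I. gegenbauer_operator lam (f i))"
  by (induction I rule: infinite_finite_induct)
     (auto simp: gegenbauer_operator_add)

lemma gegenbauer_operator_monom:
  "gegenbauer_operator lam (monom 1 i) =
     monom (real i * (real i - 1)) (i - 2) - monom (real i * (real i + 2 * lam)) i"
proof -
  consider "i = 0" | "i = 1" | k where "i = k + 2"
    by (metis One_nat_def add_2_eq_Suc' not0_implies_Suc)
  then show ?thesis
  proof cases
    case 3
    then show ?thesis
      by (simp add: gegenbauer_operator_def X_poly_def pderiv_monom mult_monom smult_monom
          add_monom algebra_simps)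
  qed (simp_all add: gegenbauer_operator_def X_poly_def pderiv_monom mult_monom smult_monom
      algebra_simps)
qed

lemma moment_functional_operator_mult:
  "moment_functional \<mu> (gegenbauer_operator lam p * q) =
     (\<Sum>i\<le>degree p. \<Sum>j\<le>degree q.
        coeff p i * coeff q j * moment_functional \<mu> (gegenbauer_operator lam (monom 1 i) * monom 1 j))"
proof -
  have "p = (\<Sum>i\<le>degree p. smult (coeff p i) (monom 1 i))"
    "q = (\<Sum>j\<le>degree q. smult (coeff q j) (monom 1 j))"
    by (simp_all add: smult_monom poly_as_sum_of_monoms)
  then have D: "gegenbauer_operator lam p * q =
      (\<Sum>i\<le>degree p. smult (coeff p i) (gegenbauer_operator lam (monom 1 i))) *
      (\<Sum>j\<le>degree q. smult (coeff q j) (monom 1 j))"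
    by (metis (no_types, lifting) gegenbauer_operator_smult gegenbauer_operator_sum sum.cong)
  show ?thesis
    unfolding D sum_product by (simp add: moment_functional_sum moment_functional_smult mult_ac)
qed

text \<open>The moments of the weight \<open>(1 - t\<^sup>2)\<^bsup>lam - 1/2\<^esup>\<close> on \<open>[-1, 1]\<close> are characterised up to a
  factor by this recurrence; it is all that is needed for the Gegenbauer operator to be symmetric
  with respect to the moment functional.\<close>

locale gegenbauer_moments =
  fixes \<mu> :: "nat \<Rightarrow> real" and lam :: real
  assumes moment_recurrence: "\<And>k. \<mu> (k + 2) * (real k + 2 * lam + 2) = (real k + 1) * \<mu> k"
    and moment_0_pos: "\<mu> 0 > 0"
    and moment_1: "\<mu> 1 = 0"
    and lam_pos: "lam > 0"
begin

lemma moment_functional_operator_monom: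
  assumes ij: "i + j = k + 2"
  shows "(real k + 2 * lam + 2) * moment_functional \<mu> (gegenbauer_operator lam (monom 1 i) * monom 1 j) =
    - (2 * lam + 1) * real i * real j * \<mu> k"
proof -
  have L: "moment_functional \<mu> (gegenbauer_operator lam (monom 1 i) * monom 1 j) =
      real i * (real i - 1) * \<mu> k - real i * (real i + 2 * lam) * \<mu> (k + 2)"
  proof -
    have "moment_functional \<mu> (gegenbauer_operator lam (monom 1 i) * monom 1 j) =
        real i * (real i - 1) * \<mu> (i - 2 + j) - real i * (real i + 2 * lam) * \<mu> (i + j)"
      by (simp add: gegenbauer_operator_monom left_diff_distrib mult_monom
          moment_functional_diff moment_functional_monom)
    moreover have "real i * (real i - 1) * \<mu> (i - 2 + j) = real i * (real i - 1) * \<mu> k"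
      using ij by (cases "i \<ge> 2") (auto simp: not_le less_2_cases_iff)
    ultimately show ?thesis using ij by simp
  qed
  have "(real k + 2 * lam + 2) * moment_functional \<mu> (gegenbauer_operator lam (monom 1 i) * monom 1 j) =
      real i * (real i - 1) * (real k + 2 * lam + 2) * \<mu> k -
      real i * (real i + 2 * lam) * (\<mu> (k + 2) * (real k + 2 * lam + 2))"
    unfolding L by (simp add: algebra_simps)
  also have "\<dots> =
      real i * ((real i - 1) * (real k + 2 * lam + 2) - (real i + 2 * lam) * (real k + 1)) * \<mu> k"
    by (simp only: moment_recurrence) (simp add: algebra_simps)
  also have "\<dots> = - (2 * lam + 1) * real i * real j * \<mu> k"
  proof -
    have j: "real j = real k + 2 - real i" using ij by linarith
    show ?thesis unfolding j by (simp add: algebra_simps)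
  qed
  finally show ?thesis .
qed

lemma moment_functional_operator_monom_commute:
  "moment_functional \<mu> (gegenbauer_operator lam (monom 1 i) * monom 1 j) =
     moment_functional \<mu> (gegenbauer_operator lam (monom 1 j) * monom 1 i)"
proof (cases "i + j \<ge> 2")
  case True
  define k where "k = i + j - 2"
  have ij: "i + j = k + 2" and ji: "j + i = k + 2"
    using True by (simp_all add: k_def)
  have "(real k + 2 * lam + 2) * moment_functional \<mu> (gegenbauer_operator lam (monom 1 i) * monom 1 j) =
      - (2 * lam + 1) * real j * real i * \<mu> k"
    using moment_functional_operator_monom[OF ij] by simp
  also have "\<dots> =
      (real k + 2 * lam + 2) * moment_functional \<mu> (gegenbauer_operator lam (monom 1 j) * monom 1 i)"
    using moment_functional_operator_monom[OF ji] by simp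
  finally show ?thesis
    using lam_pos by (simp add: add_pos_pos)
next
  case False
  then have "(i = 0 \<and> j = 0) \<or> (i = 0 \<and> j = 1) \<or> (i = 1 \<and> j = 0)"
    by auto
  then show ?thesis
    using moment_1 by (elim disjE)
      (simp_all add: gegenbauer_operator_def X_poly_def pderiv_monom moment_functional_diff
        moment_functional_minus moment_functional_smult moment_functional_monom)
qed

lemma moment_functional_operator_symmetric:
  "moment_functional \<mu> (gegenbauer_operator lam p * q) =
     moment_functional \<mu> (p * gegenbauer_operator lam q)"
proof -
  have "moment_functional \<mu> (gegenbauer_operator lam p * q) =
      (\<Sum>i\<le>degree p. \<Sum>j\<le>degree q. coeff p i * coeff q j *
        moment_functional \<mu> (gegenbauer_operator lam (monom 1 i) * monom 1 j))"
    by (rule moment_functional_operator_mult)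
  also have "\<dots> = (\<Sum>j\<le>degree q. \<Sum>i\<le>degree p. coeff q j * coeff p i *
        moment_functional \<mu> (gegenbauer_operator lam (monom 1 j) * monom 1 i))"
    by (subst sum.swap) (intro sum.cong refl; subst moment_functional_operator_monom_commute; simp)
  also have "\<dots> = moment_functional \<mu> (gegenbauer_operator lam q * p)"
    by (rule moment_functional_operator_mult[symmetric])
  finally show ?thesis
    by (simp add: mult.commute)
qed

end

section \<open>Gegenbauer polynomials\<close>

fun gegenbauer_poly :: "real \<Rightarrow> nat \<Rightarrow> real poly" where
  "gegenbauer_poly lam 0 = 1"
| "gegenbauer_poly lam (Suc 0) = smult (2 * lam) X_poly"
| "gegenbauer_poly lam (Suc (Suc l)) = smult (1 / (real l + 2))
     (smult (2 * (real l + 1 + lam)) (X_poly * gegenbauer_poly lam (Suc l)) -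
      smult (real l + 2 * lam) (gegenbauer_poly lam l))"

lemma poly_gegenbauer_poly: "poly (gegenbauer_poly lam l) t = gegenbauer lam l t"
  by (induction lam l rule: gegenbauer_poly.induct) (simp_all add: field_simps)

lemma poly_gegenbauer_poly_Suc_Suc:
  "(real l + 2) * poly (gegenbauer_poly lam (Suc (Suc l))) t =
     2 * (real l + 1 + lam) * t * poly (gegenbauer_poly lam (Suc l)) t -
     (real l + 2 * lam) * poly (gegenbauer_poly lam l) t"
  by (simp add: field_simps)

lemma poly_pderiv_gegenbauer_poly_Suc_Suc:
  "(real l + 2) * poly (pderiv (gegenbauer_poly lam (Suc (Suc l)))) t =
     2 * (real l + 1 + lam) * (poly (gegenbauer_poly lam (Suc l)) t +
       t * poly (pderiv (gegenbauer_poly lam (Suc l))) t) -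
     (real l + 2 * lam) * poly (pderiv (gegenbauer_poly lam l)) t"
  by (simp add: pderiv_smult pderiv_diff pderiv_mult field_simps)

declare gegenbauer_poly.simps(3) [simp del]

lemma poly_pderiv_gegenbauer_poly_recurrences:
  "t * poly (pderiv (gegenbauer_poly lam (Suc l))) t - poly (pderiv (gegenbauer_poly lam l)) t =
     (real l + 1) * poly (gegenbauer_poly lam (Suc l)) t \<and>
   poly (pderiv (gegenbauer_poly lam (Suc l))) t =
     (real l + 2 * lam) * poly (gegenbauer_poly lam l) t + t * poly (pderiv (gegenbauer_poly lam l)) t"
proof (induction l)
  case 0
  then show ?case by (simp add: pderiv_smult)
next
  case (Suc l)
  define c0 c1 c2 d0 d1 d2 where defs:
    "c0 = poly (gegenbauer_poly lam l) t" "c1 = poly (gegenbauer_poly lam (Suc l)) t"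
    "c2 = poly (gegenbauer_poly lam (Suc (Suc l))) t"
    "d0 = poly (pderiv (gegenbauer_poly lam l)) t" "d1 = poly (pderiv (gegenbauer_poly lam (Suc l))) t"
    "d2 = poly (pderiv (gegenbauer_poly lam (Suc (Suc l)))) t"
  have d0: "d0 = t * d1 - (real l + 1) * c1" and d1: "d1 = (real l + 2 * lam) * c0 + t * d0"
    using Suc.IH unfolding defs by auto
  have c2: "(real l + 2) * c2 = 2 * (real l + 1 + lam) * t * c1 - (real l + 2 * lam) * c0"
    unfolding defs by (rule poly_gegenbauer_poly_Suc_Suc)
  have "(real l + 2) * d2 = 2 * (real l + 1 + lam) * (c1 + t * d1) - (real l + 2 * lam) * d0"
    unfolding defs by (rule poly_pderiv_gegenbauer_poly_Suc_Suc)
  also have "\<dots> = (real l + 2) * ((real (Suc l) + 2 * lam) * c1 + t * d1)"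
    unfolding d0 by (simp add: algebra_simps)
  finally have d2: "d2 = (real (Suc l) + 2 * lam) * c1 + t * d1"
    by simp
  have "t * d2 - d1 = (real (Suc l) + 2 * lam) * t * c1 - (1 - t * t) * d1"
    unfolding d2 by (simp add: algebra_simps)
  also have "(1 - t * t) * d1 = (real l + 2 * lam) * c0 - (real l + 1) * t * c1"
    using d1 unfolding d0 by (simp add: algebra_simps)
  finally have "t * d2 - d1 = (real (Suc l) + 1) * c2"
    using c2 by (simp add: algebra_simps)
  with d2 show ?case
    unfolding defs by simp
qed

lemma one_minus_X2_pderiv_gegenbauer_poly:
  "(1 - X_poly * X_poly) * pderiv (gegenbauer_poly lam (Suc l)) =
     smult (real l + 2 * lam) (gegenbauer_poly lam l) -
     smult (real l + 1) (X_poly * gegenbauer_poly lam (Suc l))"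
proof -
  have "poly ((1 - X_poly * X_poly) * pderiv (gegenbauer_poly lam (Suc l))) t =
      poly (smult (real l + 2 * lam) (gegenbauer_poly lam l) -
        smult (real l + 1) (X_poly * gegenbauer_poly lam (Suc l))) t" for t
  proof -
    have d0: "poly (pderiv (gegenbauer_poly lam l)) t =
        t * poly (pderiv (gegenbauer_poly lam (Suc l))) t -
        (real l + 1) * poly (gegenbauer_poly lam (Suc l)) t"
      and d1: "poly (pderiv (gegenbauer_poly lam (Suc l))) t =
        (real l + 2 * lam) * poly (gegenbauer_poly lam l) t + t * poly (pderiv (gegenbauer_poly lam l)) t"
      using poly_pderiv_gegenbauer_poly_recurrences[of t lam l] by auto
    show ?thesis using d1 unfolding d0 by (simp add: algebra_simps)
  qed
  then show ?thesis
    by (simp add: poly_eq_poly_eq_iff[symmetric] fun_eq_iff)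
qed

lemma gegenbauer_operator_gegenbauer_poly:
  "gegenbauer_operator lam (gegenbauer_poly lam m) =
     smult (- (real m * (real m + 2 * lam))) (gegenbauer_poly lam m)"
proof (cases m)
  case (Suc l)
  have "poly (gegenbauer_operator lam (gegenbauer_poly lam (Suc l))) t =
      - (real (Suc l) * (real (Suc l) + 2 * lam)) * poly (gegenbauer_poly lam (Suc l)) t" for t
  proof -
    define c1 d0 d1 e1 where defs:
      "c1 = poly (gegenbauer_poly lam (Suc l)) t" "d0 = poly (pderiv (gegenbauer_poly lam l)) t"
      "d1 = poly (pderiv (gegenbauer_poly lam (Suc l))) t"
      "e1 = poly (pderiv (pderiv (gegenbauer_poly lam (Suc l)))) t"
    have d0: "d0 = t * d1 - (real l + 1) * c1"
      using poly_pderiv_gegenbauer_poly_recurrences[of t lam l] unfolding defs by auto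
    have "poly (pderiv ((1 - X_poly * X_poly) * pderiv (gegenbauer_poly lam (Suc l)))) t =
        poly (pderiv (smult (real l + 2 * lam) (gegenbauer_poly lam l) -
          smult (real l + 1) (X_poly * gegenbauer_poly lam (Suc l)))) t"
      by (simp only: one_minus_X2_pderiv_gegenbauer_poly)
    then have "(1 - t * t) * e1 - 2 * t * d1 = (real l + 2 * lam) * d0 - (real l + 1) * (c1 + t * d1)"
      unfolding defs by (simp add: pderiv_mult pderiv_diff pderiv_smult algebra_simps)
    then have "(1 - t * t) * e1 - (2 * lam + 1) * t * d1 = - ((real l + 1) * (real l + 1 + 2 * lam)) * c1"
      unfolding d0 by (simp add: algebra_simps)
    then show ?thesis
      unfolding defs by (simp add: gegenbauer_operator_def algebra_simps)
  qed
  then show ?thesis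
    unfolding Suc by (simp add: poly_eq_poly_eq_iff[symmetric] fun_eq_iff)
qed (simp add: gegenbauer_operator_def)

text \<open>The value at \<open>1\<close> of the \<open>l\<close>-th Gegenbauer polynomial.\<close>

definition gegenbauer_one :: "real \<Rightarrow> nat \<Rightarrow> real" where
  "gegenbauer_one lam l = pochhammer (2 * lam) l / fact l"

lemma gegenbauer_one_0 [simp]: "gegenbauer_one lam 0 = 1"
  by (simp add: gegenbauer_one_def)

lemma gegenbauer_one_Suc:
  "real (Suc l) * gegenbauer_one lam (Suc l) = (real l + 2 * lam) * gegenbauer_one lam l"
proof -
  have "(fact l :: real) \<noteq> 0" by simp
  then show ?thesis
    by (simp add: gegenbauer_one_def pochhammer_Suc field_simps del: of_nat_Suc)
qed

lemma gegenbauer_one_pos: "lam > 0 \<Longrightarrow> gegenbauer_one lam l > 0"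
  by (simp add: gegenbauer_one_def pochhammer_pos)

lemma sum_gegenbauer_one_eq:
  fixes F w :: "nat \<Rightarrow> real"
  assumes "w 0 = 2 * lam * F 0"
    and "\<And>m. real (Suc m) * F m + w (Suc m) = (real (Suc m) + 2 * lam) * F (Suc m)"
  shows "(\<Sum>l\<le>m. w l * gegenbauer_one lam l) = (real m + 2 * lam) * F m * gegenbauer_one lam m"
proof (induction m)
  case (Suc m)
  have "(\<Sum>l\<le>Suc m. w l * gegenbauer_one lam l) =
      F m * ((real m + 2 * lam) * gegenbauer_one lam m) + w (Suc m) * gegenbauer_one lam (Suc m)"
    by (simp add: Suc.IH mult_ac)
  also have "\<dots> = (real (Suc m) * F m + w (Suc m)) * gegenbauer_one lam (Suc m)"
    by (simp only: gegenbauer_one_Suc[symmetric]) (simp add: algebra_simps)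
  also have "\<dots> = (real (Suc m) + 2 * lam) * F (Suc m) * gegenbauer_one lam (Suc m)"
    by (simp only: assms(2))
  finally show ?case .
qed (simp add: assms(1))

definition gegenbauer_kernel :: "real \<Rightarrow> nat \<Rightarrow> real poly" where
  "gegenbauer_kernel lam m = (\<Sum>l\<le>m. smult ((real l + lam) / lam) (gegenbauer_poly lam l))"

context gegenbauer_moments
begin

lemma moment_functional_gegenbauer_orthogonal:
  assumes "l \<noteq> k"
  shows "moment_functional \<mu> (gegenbauer_poly lam l * gegenbauer_poly lam k) = 0"
proof -
  have "real l * (real l + 2 * lam) * moment_functional \<mu> (gegenbauer_poly lam l * gegenbauer_poly lam k) =
      real k * (real k + 2 * lam) * moment_functional \<mu> (gegenbauer_poly lam l * gegenbauer_poly lam k)"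
    using moment_functional_operator_symmetric[of "gegenbauer_poly lam l" "gegenbauer_poly lam k"]
    by (simp add: gegenbauer_operator_gegenbauer_poly moment_functional_smult moment_functional_minus)
  moreover have "real l * (real l + 2 * lam) \<noteq> real k * (real k + 2 * lam)"
  proof
    assume "real l * (real l + 2 * lam) = real k * (real k + 2 * lam)"
    then have "(real l - real k) * (real l + real k + 2 * lam) = 0"
      by (simp add: algebra_simps)
    with lam_pos assms show False
      by simp
  qed
  ultimately show ?thesis
    by simp
qed

lemma X_times_gegenbauer_poly_0:
  "X_poly * gegenbauer_poly lam 0 = smult (1 / (2 * lam)) (gegenbauer_poly lam 1)"
  using lam_pos by simp

lemma X_times_gegenbauer_poly_Suc:
  "X_poly * gegenbauer_poly lam (Suc l) =
     smult ((real l + 2) / (2 * (real l + 1 + lam))) (gegenbauer_poly lam (Suc (Suc l))) +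
     smult ((real l + 2 * lam) / (2 * (real l + 1 + lam))) (gegenbauer_poly lam l)"
proof -
  have pos: "real l + 1 + lam > 0"
    using lam_pos by simp
  have "poly (X_poly * gegenbauer_poly lam (Suc l)) t =
      poly (smult ((real l + 2) / (2 * (real l + 1 + lam))) (gegenbauer_poly lam (Suc (Suc l))) +
        smult ((real l + 2 * lam) / (2 * (real l + 1 + lam))) (gegenbauer_poly lam l)) t" for t
  proof -
    have "poly (smult ((real l + 2) / (2 * (real l + 1 + lam))) (gegenbauer_poly lam (Suc (Suc l))) +
        smult ((real l + 2 * lam) / (2 * (real l + 1 + lam))) (gegenbauer_poly lam l)) t =
      ((real l + 2) * poly (gegenbauer_poly lam (Suc (Suc l))) t) / (2 * (real l + 1 + lam)) +
      ((real l + 2 * lam) * poly (gegenbauer_poly lam l) t) / (2 * (real l + 1 + lam))"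
      by simp
    also have "\<dots> = t * poly (gegenbauer_poly lam (Suc l)) t"
      unfolding poly_gegenbauer_poly_Suc_Suc using pos by (simp add: diff_divide_distrib)
    finally show ?thesis by simp
  qed
  then show ?thesis
    by (simp add: poly_eq_poly_eq_iff[symmetric] fun_eq_iff)
qed

text \<open>Both sides are the moment of \<open>X G\<^sub>l G\<^sub>l\<^sub>+\<^sub>1\<close>, expanded by the three-term recurrence
  in either factor.\<close>

lemma moment_functional_gegenbauer_poly_sq_Suc:
  "real (Suc l) / (2 * (real l + lam)) *
     moment_functional \<mu> (gegenbauer_poly lam (Suc l) * gegenbauer_poly lam (Suc l)) =
   (real l + 2 * lam) / (2 * (real l + 1 + lam)) *
     moment_functional \<mu> (gegenbauer_poly lam l * gegenbauer_poly lam l)"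
proof -
  define P where "P = moment_functional \<mu> (X_poly * gegenbauer_poly lam l * gegenbauer_poly lam (Suc l))"
  have "P = real (Suc l) / (2 * (real l + lam)) *
      moment_functional \<mu> (gegenbauer_poly lam (Suc l) * gegenbauer_poly lam (Suc l))"
  proof (cases l)
    case 0
    then show ?thesis
      unfolding P_def using lam_pos by (simp add: X_times_gegenbauer_poly_0 moment_functional_smult)
  next
    case (Suc j)
    have "P = moment_functional \<mu>
        ((X_poly * gegenbauer_poly lam (Suc j)) * gegenbauer_poly lam (Suc (Suc j)))"
      unfolding P_def Suc ..
    then show ?thesis
      unfolding X_times_gegenbauer_poly_Suc Suc
      by (simp add: distrib_right moment_functional_add moment_functional_smult
          moment_functional_gegenbauer_orthogonal add_ac)
  qed
  moreover have "P = (real l + 2 * lam) / (2 * (real l + 1 + lam)) *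
      moment_functional \<mu> (gegenbauer_poly lam l * gegenbauer_poly lam l)"
  proof -
    have "P = moment_functional \<mu> ((X_poly * gegenbauer_poly lam (Suc l)) * gegenbauer_poly lam l)"
      unfolding P_def by (simp add: mult_ac)
    then show ?thesis
      unfolding X_times_gegenbauer_poly_Suc
      by (simp add: distrib_right moment_functional_add moment_functional_smult
          moment_functional_gegenbauer_orthogonal)
  qed
  ultimately show ?thesis
    by simp
qed

lemma moment_functional_gegenbauer_poly_sq:
  "(real l + lam) * moment_functional \<mu> (gegenbauer_poly lam l * gegenbauer_poly lam l) =
     lam * gegenbauer_one lam l * \<mu> 0"
proof (induction l)
  case (Suc l)
  have pos: "real l + lam > 0" "real l + 1 + lam > 0"
    using lam_pos by simp_all
  have "real (Suc l) * ((real (Suc l) + lam) *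
      moment_functional \<mu> (gegenbauer_poly lam (Suc l) * gegenbauer_poly lam (Suc l))) =
    (real l + 2 * lam) * ((real l + lam) *
      moment_functional \<mu> (gegenbauer_poly lam l * gegenbauer_poly lam l))"
    using moment_functional_gegenbauer_poly_sq_Suc[of l] pos by (simp add: field_simps)
  also have "\<dots> = lam * \<mu> 0 * ((real l + 2 * lam) * gegenbauer_one lam l)"
    by (simp only: Suc.IH) (simp add: mult_ac)
  also have "\<dots> = real (Suc l) * (lam * gegenbauer_one lam (Suc l) * \<mu> 0)"
    by (simp only: gegenbauer_one_Suc[symmetric]) (simp add: mult_ac)
  finally show ?case
    by (metis mult_cancel_left of_nat_eq_0_iff nat.distinct(1))
qed simp

lemma moment_functional_gegenbauer_kernel:
  "moment_functional \<mu> (gegenbauer_poly lam j * gegenbauer_kernel lam m) =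
     (if j \<le> m then gegenbauer_one lam j * \<mu> 0 else 0)"
proof -
  have "moment_functional \<mu> (gegenbauer_poly lam j * gegenbauer_kernel lam m) =
      (\<Sum>l\<le>m. (real l + lam) / lam * moment_functional \<mu> (gegenbauer_poly lam j * gegenbauer_poly lam l))"
    unfolding gegenbauer_kernel_def
    by (simp add: sum_distrib_left moment_functional_sum moment_functional_smult)
  also have "\<dots> = (\<Sum>l\<le>m. if l = j then (real j + lam) / lam *
      moment_functional \<mu> (gegenbauer_poly lam j * gegenbauer_poly lam j) else 0)"
    by (rule sum.cong) (auto simp: moment_functional_gegenbauer_orthogonal)
  also have "\<dots> = (if j \<le> m then gegenbauer_one lam j * \<mu> 0 else 0)"
    using moment_functional_gegenbauer_poly_sq[of j] lam_pos by (simp add: field_simps)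
  finally show ?thesis .
qed

lemma moment_functional_kernel_sq:
  "2 * lam * (2 * lam + 1) * moment_functional \<mu> (gegenbauer_kernel lam m * gegenbauer_kernel lam m) =
     \<mu> 0 * (real m + 2 * lam) * (2 * real m + 2 * lam + 1) * gegenbauer_one lam m"
proof -
  have L: "moment_functional \<mu> (gegenbauer_kernel lam m * gegenbauer_kernel lam m) =
      (\<Sum>l\<le>m. (real l + lam) / lam * moment_functional \<mu> (gegenbauer_poly lam l * gegenbauer_kernel lam m))"
    unfolding gegenbauer_kernel_def[of lam m]
    by (simp add: sum_distrib_right moment_functional_sum moment_functional_smult)
  have "2 * lam * (2 * lam + 1) * moment_functional \<mu> (gegenbauer_kernel lam m * gegenbauer_kernel lam m) =
      \<mu> 0 * (\<Sum>l\<le>m. 2 * (2 * lam + 1) * (real l + lam) * gegenbauer_one lam l)"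
    unfolding L sum_distrib_left
    by (intro sum.cong refl)
       (use lam_pos in \<open>simp add: moment_functional_gegenbauer_kernel; simp add: field_simps\<close>)
  also have "(\<Sum>l\<le>m. 2 * (2 * lam + 1) * (real l + lam) * gegenbauer_one lam l) =
      (real m + 2 * lam) * (2 * real m + 2 * lam + 1) * gegenbauer_one lam m"
    by (rule sum_gegenbauer_one_eq) (simp_all add: algebra_simps)
  finally show ?thesis
    by (simp add: mult_ac)
qed

lemma moment_functional_operator_kernel_sq:
  "2 * lam * (2 * lam + 3) *
     moment_functional \<mu> (gegenbauer_operator lam (gegenbauer_kernel lam m) * gegenbauer_kernel lam m) =
   - \<mu> 0 * (real m + 2 * lam) * ((2 * real m + 2 * lam + 1) * real m * (real m + 2 * lam + 1)) *
     gegenbauer_one lam m"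
proof -
  have "gegenbauer_operator lam (gegenbauer_kernel lam m) =
      (\<Sum>l\<le>m. smult ((real l + lam) / lam * (- (real l * (real l + 2 * lam)))) (gegenbauer_poly lam l))"
    unfolding gegenbauer_kernel_def
    by (simp add: gegenbauer_operator_sum gegenbauer_operator_smult gegenbauer_operator_gegenbauer_poly
        smult_smult)
  then have L: "moment_functional \<mu>
      (gegenbauer_operator lam (gegenbauer_kernel lam m) * gegenbauer_kernel lam m) =
      (\<Sum>l\<le>m. (real l + lam) / lam * (- (real l * (real l + 2 * lam))) *
        moment_functional \<mu> (gegenbauer_poly lam l * gegenbauer_kernel lam m))"
    by (simp add: sum_distrib_right moment_functional_sum moment_functional_smult moment_functional_minus)
  have "2 * lam * (2 * lam + 3) *
      moment_functional \<mu> (gegenbauer_operator lam (gegenbauer_kernel lam m) * gegenbauer_kernel lam m) =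
      - \<mu> 0 * (\<Sum>l\<le>m. 2 * (2 * lam + 3) * (real l + lam) * (real l * (real l + 2 * lam)) *
        gegenbauer_one lam l)"
    unfolding L sum_distrib_left sum_negf[symmetric]
    by (intro sum.cong refl)
       (use lam_pos in \<open>simp add: moment_functional_gegenbauer_kernel; simp add: field_simps\<close>)
  also have "(\<Sum>l\<le>m. 2 * (2 * lam + 3) * (real l + lam) * (real l * (real l + 2 * lam)) *
        gegenbauer_one lam l) =
      (real m + 2 * lam) * ((2 * real m + 2 * lam + 1) * real m * (real m + 2 * lam + 1)) *
        gegenbauer_one lam m"
    by (rule sum_gegenbauer_one_eq) (simp_all add: algebra_simps)
  finally show ?thesis
    by (simp add: mult_ac)
qed

lemma moment_functional_X_kernel_sq_Suc:
  "lam * moment_functional \<mu> (X_poly * gegenbauer_kernel lam (Suc m) * gegenbauer_kernel lam (Suc m)) =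
   lam * moment_functional \<mu> (X_poly * gegenbauer_kernel lam m * gegenbauer_kernel lam m) +
   (real m + 2 * lam) * gegenbauer_one lam m * \<mu> 0"
proof -
  define a where "a = (real (Suc m) + lam) / lam"
  define \<gamma> where "\<gamma> = (real m + 2 * lam) / (2 * (real m + 1 + lam))"
  define G where "G = gegenbauer_poly lam (Suc m)"
  define K where "K = gegenbauer_kernel lam m"
  have XG: "X_poly * G =
      smult ((real m + 2) / (2 * (real m + 1 + lam))) (gegenbauer_poly lam (Suc (Suc m))) +
      smult \<gamma> (gegenbauer_poly lam m)"
    unfolding G_def \<gamma>_def by (rule X_times_gegenbauer_poly_Suc)
  have "gegenbauer_kernel lam (Suc m) = K + smult a G"
    by (simp add: gegenbauer_kernel_def K_def a_def G_def)
  then have "moment_functional \<mu> (X_poly * gegenbauer_kernel lam (Suc m) * gegenbauer_kernel lam (Suc m)) =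
      moment_functional \<mu> (X_poly * K * K) + 2 * a * moment_functional \<mu> (X_poly * G * K) +
      a * a * moment_functional \<mu> (X_poly * G * G)"
    by (simp add: algebra_simps moment_functional_add moment_functional_smult)
  also have "moment_functional \<mu> (X_poly * G * K) = \<gamma> * (gegenbauer_one lam m * \<mu> 0)"
    unfolding XG K_def
    by (simp add: distrib_right moment_functional_add moment_functional_smult
        moment_functional_gegenbauer_kernel)
  also have "moment_functional \<mu> (X_poly * G * G) = 0"
    unfolding XG
    by (simp add: distrib_right moment_functional_add moment_functional_smult G_def
        moment_functional_gegenbauer_orthogonal)
  finally have "lam * moment_functional \<mu> (X_poly * gegenbauer_kernel lam (Suc m) * gegenbauer_kernel lam (Suc m)) =
      lam * moment_functional \<mu> (X_poly * K * K) + lam * (2 * a * \<gamma>) * (gegenbauer_one lam m * \<mu> 0)"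
    by (simp add: algebra_simps)
  also have "lam * (2 * a * \<gamma>) = real m + 2 * lam"
  proof -
    have "real m + 1 + lam \<noteq> 0" "lam \<noteq> 0"
      using lam_pos by simp_all
    moreover have "lam * (2 * a * \<gamma>) = (real m + 1 + lam) / (real m + 1 + lam) * (lam / lam) * (real m + 2 * lam)"
      by (simp add: a_def \<gamma>_def add_ac)
    ultimately show ?thesis
      by simp
  qed
  finally show ?thesis
    by (simp add: K_def mult_ac)
qed

lemma moment_functional_X_kernel_sq:
  "lam * (2 * lam + 1) * moment_functional \<mu> (X_poly * gegenbauer_kernel lam m * gegenbauer_kernel lam m) =
     \<mu> 0 * real m * gegenbauer_one lam m * (real m + 2 * lam)"
proof (induction m)
  case 0
  then show ?case
    using moment_1 by (simp add: gegenbauer_kernel_def X_poly_def moment_functional_monom lam_pos)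
next
  case (Suc m)
  have "lam * (2 * lam + 1) *
      moment_functional \<mu> (X_poly * gegenbauer_kernel lam (Suc m) * gegenbauer_kernel lam (Suc m)) =
    (2 * lam + 1) *
      (lam * moment_functional \<mu> (X_poly * gegenbauer_kernel lam (Suc m) * gegenbauer_kernel lam (Suc m)))"
    by (simp only: mult_ac)
  also have "\<dots> = lam * (2 * lam + 1) *
      moment_functional \<mu> (X_poly * gegenbauer_kernel lam m * gegenbauer_kernel lam m) +
    (2 * lam + 1) * (real m + 2 * lam) * gegenbauer_one lam m * \<mu> 0"
    by (simp only: moment_functional_X_kernel_sq_Suc) (simp add: algebra_simps)
  also have "\<dots> = \<mu> 0 * ((real m + 2 * lam) * gegenbauer_one lam m) * (real m + 2 * lam + 1)"
    by (simp only: Suc.IH) (simp add: algebra_simps)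
  also have "\<dots> = \<mu> 0 * real (Suc m) * gegenbauer_one lam (Suc m) * (real (Suc m) + 2 * lam)"
    unfolding gegenbauer_one_Suc[symmetric] by (simp add: algebra_simps)
  finally show ?case .
qed

lemma moment_functional_kernel_sq_ratio:
  "moment_functional \<mu> (gegenbauer_kernel lam m * gegenbauer_kernel lam m) /
     \<bar>moment_functional \<mu> (X_poly * gegenbauer_kernel lam m * gegenbauer_kernel lam m)\<bar> =
   (2 * real m + 2 * lam + 1) / (2 * real m)"
proof -
  define c where "c = \<mu> 0 * (real m + 2 * lam) * gegenbauer_one lam m"
  define b where "b = 2 * lam + 1"
  have pos: "c > 0" "lam > 0" "b > 0"
    using moment_0_pos lam_pos gegenbauer_one_pos[OF lam_pos] by (simp_all add: c_def b_def)
  have A: "moment_functional \<mu> (gegenbauer_kernel lam m * gegenbauer_kernel lam m) =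
      c * (2 * real m + 2 * lam + 1) / (2 * lam * b)"
    by (rule eq_divide_imp)
       (use pos moment_functional_kernel_sq[of m] in \<open>simp_all add: c_def b_def mult_ac\<close>)
  have B: "moment_functional \<mu> (X_poly * gegenbauer_kernel lam m * gegenbauer_kernel lam m) =
      c * real m / (lam * b)"
    by (rule eq_divide_imp)
       (use pos moment_functional_X_kernel_sq[of m] in \<open>simp_all add: c_def b_def mult_ac\<close>)
  show ?thesis
    unfolding A B using pos by (cases "m = 0") (simp_all add: field_simps)
qed

lemma moment_functional_operator_kernel_sq_ratio:
  "- moment_functional \<mu> (gegenbauer_operator lam (gegenbauer_kernel lam m) * gegenbauer_kernel lam m) /
     moment_functional \<mu> (gegenbauer_kernel lam m * gegenbauer_kernel lam m) =
   real m * (real m + 2 * lam + 1) * (2 * lam + 1) / (2 * lam + 3)"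
proof -
  define c where "c = \<mu> 0 * (real m + 2 * lam) * (2 * real m + 2 * lam + 1) * gegenbauer_one lam m"
  define b b' where "b = 2 * lam + 1" and "b' = 2 * lam + 3"
  have pos: "c > 0" "lam > 0" "b > 0" "b' > 0"
    using moment_0_pos lam_pos gegenbauer_one_pos[OF lam_pos] by (simp_all add: c_def b_def b'_def)
  have A: "moment_functional \<mu> (gegenbauer_kernel lam m * gegenbauer_kernel lam m) = c / (2 * lam * b)"
    by (rule eq_divide_imp)
       (use pos moment_functional_kernel_sq[of m] in \<open>simp_all add: c_def b_def mult_ac\<close>)
  have B: "moment_functional \<mu> (gegenbauer_operator lam (gegenbauer_kernel lam m) * gegenbauer_kernel lam m) =
      - c * real m * (real m + 2 * lam + 1) / (2 * lam * b')"
    by (rule eq_divide_imp)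
       (use pos moment_functional_operator_kernel_sq[of m] in \<open>simp_all add: c_def b'_def mult_ac\<close>)
  show ?thesis
    unfolding A B b_def[symmetric] b'_def[symmetric] using pos by (simp add: field_simps)
qed

end

section \<open>The Laplace-Beltrami operator on zonal polynomials\<close>

text \<open>Along the line \<open>y + t b\<close> with \<open>b \<bullet> b = 1\<close>, the function \<open>x \<mapsto> (x /\<^sub>R norm x) \<bullet> e\<close>
  is \<open>(u + t a) / sqrt (s + 2 t \<beta> + t\<^sup>2)\<close> with \<open>u = y \<bullet> e\<close>, \<open>a = b \<bullet> e\<close>, \<open>s = y \<bullet> y\<close> and
  \<open>\<beta> = y \<bullet> b\<close>.\<close>

lemma has_real_derivative_normalized_inner:
  fixes s \<beta> u a t :: real
  defines "q \<equiv> \<lambda>t. s + 2 * t * \<beta> + t\<^sup>2"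
  assumes q: "q t > 0"
  shows "((\<lambda>t. (u + t * a) / sqrt (q t)) has_real_derivative
    (a * q t - (u + t * a) * (\<beta> + t)) / (q t * sqrt (q t))) (at t)"
proof -
  have "((\<lambda>t. (u + t * a) / sqrt (q t)) has_real_derivative
      (a * sqrt (q t) - (u + t * a) * (inverse (sqrt (q t)) / 2 * (2 * \<beta> + 2 * t))) /
        (sqrt (q t) * sqrt (q t))) (at t)"
    unfolding q_def
    by (rule derivative_eq_intros DERIV_real_sqrt[THEN DERIV_chain2] refl
        | use q in \<open>simp add: q_def power2_eq_square algebra_simps\<close>)+
  moreover have "(a * sqrt (q t) - (u + t * a) * (inverse (sqrt (q t)) / 2 * (2 * \<beta> + 2 * t))) /
      (sqrt (q t) * sqrt (q t)) = (a * q t - (u + t * a) * (\<beta> + t)) / (q t * sqrt (q t))"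
    using q by (simp add: field_simps)
  ultimately show ?thesis
    by simp
qed

lemma has_real_derivative_normalized_inner_derivative_0:
  fixes s \<beta> u a :: real
  defines "q \<equiv> \<lambda>t. s + 2 * t * \<beta> + t\<^sup>2"
  assumes s: "s > 0"
  shows "((\<lambda>t. (a * q t - (u + t * a) * (\<beta> + t)) / (q t * sqrt (q t))) has_real_derivative
    (3 * u * \<beta>\<^sup>2 - u * s - 2 * a * \<beta> * s) / (s\<^sup>2 * sqrt s)) (at 0)"
proof -
  define r where "r = sqrt s"
  have r: "r > 0" and s_r: "s = r * r"
    using s by (simp_all add: r_def)
  have "((\<lambda>t. (a * q t - (u + t * a) * (\<beta> + t)) / (q t * sqrt (q t))) has_real_derivative
      ((a * (2 * \<beta>) - (a * \<beta> + u)) * (s * sqrt s) -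
        (a * s - u * \<beta>) * (2 * \<beta> * sqrt s + s * (inverse (sqrt s) / 2 * (2 * \<beta>)))) /
      ((s * sqrt s) * (s * sqrt s))) (at 0)"
    unfolding q_def
    by (rule derivative_eq_intros DERIV_real_sqrt[THEN DERIV_chain2] refl
        | use s in \<open>simp add: power2_eq_square algebra_simps\<close>)+
  moreover have "((a * (2 * \<beta>) - (a * \<beta> + u)) * (s * r) -
        (a * s - u * \<beta>) * (2 * \<beta> * r + s * (inverse r / 2 * (2 * \<beta>)))) / ((s * r) * (s * r)) =
      (3 * u * \<beta>\<^sup>2 - u * s - 2 * a * \<beta> * s) / (s\<^sup>2 * r)"
    unfolding s_r using r by (simp add: field_simps power2_eq_square)
  ultimately show ?thesis
    by (simp add: r_def)
qed

lemma deriv2_poly_normalized_inner_0: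
  fixes s \<beta> u a :: real and P :: "real poly"
  assumes s: "s > 0"
  shows "deriv (deriv (\<lambda>t. poly P ((u + t * a) / sqrt (s + 2 * t * \<beta> + t\<^sup>2)))) 0 =
     poly (pderiv (pderiv P)) (u / sqrt s) * ((a * s - u * \<beta>) / (s * sqrt s))\<^sup>2 +
     poly (pderiv P) (u / sqrt s) * ((3 * u * \<beta>\<^sup>2 - u * s - 2 * a * \<beta> * s) / (s\<^sup>2 * sqrt s))"
proof -
  define q where "q t = s + 2 * t * \<beta> + t\<^sup>2" for t
  define h where "h t = (u + t * a) / sqrt (q t)" for t
  define h' where "h' t = (a * q t - (u + t * a) * (\<beta> + t)) / (q t * sqrt (q t))" for t
  define h'' where "h'' = (3 * u * \<beta>\<^sup>2 - u * s - 2 * a * \<beta> * s) / (s\<^sup>2 * sqrt s)"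
  have U: "open {t. q t > 0}"
    unfolding q_def by (intro open_Collect_less continuous_intros)
  have U0: "q 0 > 0"
    using s by (simp add: q_def)
  have dh: "(h has_real_derivative h' t) (at t)" if "q t > 0" for t
    using has_real_derivative_normalized_inner[where s = s and \<beta> = \<beta> and t = t and u = u and a = a]
      that
    unfolding h_def h'_def q_def by simp
  have dh': "(h' has_real_derivative h'') (at 0)"
    using has_real_derivative_normalized_inner_derivative_0[OF s, where \<beta> = \<beta> and a = a and u = u]
    unfolding h'_def h''_def q_def by simp
  have "eventually (\<lambda>t. q t > 0) (nhds 0)"
    using eventually_nhds_in_open[OF U] U0 by simp
  moreover have "((\<lambda>t. poly P (h t)) has_real_derivative poly (pderiv P) (h t) * h' t) (at t)"
    if "q t > 0" for t
    by (rule derivative_eq_intros DERIV_chain2[OF poly_DERIV dh[OF that]] refl | simp)+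
  ultimately have "eventually (\<lambda>t. deriv (\<lambda>t. poly P (h t)) t = poly (pderiv P) (h t) * h' t) (nhds 0)"
    by (auto elim!: eventually_mono intro: DERIV_imp_deriv)
  then have "deriv (deriv (\<lambda>t. poly P (h t))) 0 = deriv (\<lambda>t. poly (pderiv P) (h t) * h' t) 0"
    by (rule deriv_cong_ev) simp
  also have "\<dots> = poly (pderiv (pderiv P)) (h 0) * h' 0 * h' 0 + poly (pderiv P) (h 0) * h''"
    by (rule DERIV_imp_deriv)
       (rule derivative_eq_intros DERIV_chain2[OF poly_DERIV dh[OF U0]] dh' refl
        | simp add: algebra_simps)+
  finally show ?thesis
    using s by (simp add: h_def h'_def h''_def q_def power2_eq_square)
qed

lemma deriv2_zonal_poly_along_line:
  fixes e y b :: "real ^ 'n" and P :: "real poly"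
  assumes s: "s = y \<bullet> y" and u: "u = y \<bullet> e" and y: "y \<noteq> 0" and b: "b \<bullet> b = 1"
  shows "deriv (deriv (\<lambda>t. poly P (((y + t *\<^sub>R b) /\<^sub>R norm (y + t *\<^sub>R b)) \<bullet> e))) 0 =
    poly (pderiv (pderiv P)) (u / sqrt s) * ((e \<bullet> b * s - u * (y \<bullet> b)) / (s * sqrt s))\<^sup>2 +
    poly (pderiv P) (u / sqrt s) *
      ((3 * u * (y \<bullet> b)\<^sup>2 - u * s - 2 * (e \<bullet> b) * (y \<bullet> b) * s) / (s\<^sup>2 * sqrt s))"
proof -
  have "norm (y + t *\<^sub>R b) = sqrt (s + 2 * t * (y \<bullet> b) + t\<^sup>2)" for t
    using b by (simp add: s norm_eq_sqrt_inner inner_simps inner_commute power2_eq_square algebra_simps)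
  then have "((y + t *\<^sub>R b) /\<^sub>R norm (y + t *\<^sub>R b)) \<bullet> e =
      (u + t * (e \<bullet> b)) / sqrt (s + 2 * t * (y \<bullet> b) + t\<^sup>2)" for t
    by (simp add: u inner_simps inner_commute divide_inverse mult.commute)
  moreover have "s > 0"
    using y by (simp add: s)
  ultimately show ?thesis
    by (simp add: deriv2_poly_normalized_inner_0)
qed

lemma laplace_beltrami_zonal_poly:
  fixes e y :: "real ^ 'n" and P :: "real poly"
  assumes e: "norm e = 1" and y: "y \<noteq> 0"
  shows "laplace_beltrami (\<lambda>x. poly P (x \<bullet> e)) y =
     (poly (pderiv (pderiv P)) ((y \<bullet> e) / norm y) * (1 - ((y \<bullet> e) / norm y)\<^sup>2)
      - (real CARD('n) - 1) * ((y \<bullet> e) / norm y) * poly (pderiv P) ((y \<bullet> e) / norm y)) / (y \<bullet> y)"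
proof -
  define s u where "s = y \<bullet> y" and "u = y \<bullet> e"
  define A B where "A = poly (pderiv (pderiv P)) (u / sqrt s)" and "B = poly (pderiv P) (u / sqrt s)"
  have s: "s > 0"
    using y by (simp add: s_def)
  have "laplace_beltrami (\<lambda>x. poly P (x \<bullet> e)) y =
      (\<Sum>b\<in>Basis. A * ((e \<bullet> b * s - u * (y \<bullet> b)) / (s * sqrt s))\<^sup>2 +
        B * ((3 * u * (y \<bullet> b)\<^sup>2 - u * s - 2 * (e \<bullet> b) * (y \<bullet> b) * s) / (s\<^sup>2 * sqrt s)))"
    unfolding laplace_beltrami_def laplacian_def A_def B_def
    by (intro sum.cong refl deriv2_zonal_poly_along_line[OF s_def u_def y]) simp
  also have "\<dots> = A * ((\<Sum>b\<in>Basis. (e \<bullet> b * s - u * (y \<bullet> b))\<^sup>2) / (s * sqrt s)\<^sup>2) +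
      B * ((\<Sum>b\<in>Basis. 3 * u * (y \<bullet> b)\<^sup>2 - u * s - 2 * (e \<bullet> b) * (y \<bullet> b) * s) / (s\<^sup>2 * sqrt s))"
    by (simp add: sum_distrib_left[symmetric] sum.distrib sum_divide_distrib[symmetric] power_divide)
  also have "(\<Sum>b\<in>Basis. (e \<bullet> b * s - u * (y \<bullet> b))\<^sup>2) =
      (\<Sum>b\<in>Basis. s * s * ((e \<bullet> b) * (e \<bullet> b)) - 2 * s * u * ((e \<bullet> b) * (y \<bullet> b)) +
        u * u * ((y \<bullet> b) * (y \<bullet> b)))"
    by (rule sum.cong) (auto simp: power2_eq_square algebra_simps)
  also have "\<dots> = s * s * (e \<bullet> e) - 2 * s * u * (e \<bullet> y) + u * u * (y \<bullet> y)"
    by (simp add: sum.distrib sum_subtractf sum_distrib_left[symmetric] euclidean_inner[symmetric])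
  also have "(\<Sum>b\<in>Basis. 3 * u * (y \<bullet> b)\<^sup>2 - u * s - 2 * (e \<bullet> b) * (y \<bullet> b) * s) =
      (\<Sum>b\<in>Basis. 3 * u * ((y \<bullet> b) * (y \<bullet> b)) - u * s - 2 * s * ((e \<bullet> b) * (y \<bullet> b)))"
    by (rule sum.cong) (auto simp: power2_eq_square algebra_simps)
  also have "\<dots> = 3 * u * (y \<bullet> y) - u * s * real CARD('n) - 2 * s * (e \<bullet> y)"
    by (simp add: sum.distrib sum_subtractf sum_distrib_left[symmetric] euclidean_inner[symmetric])
  finally have L: "laplace_beltrami (\<lambda>x. poly P (x \<bullet> e)) y =
      A * ((s * s - 2 * s * u * u + u * u * s) / (s * sqrt s)\<^sup>2) +
      B * ((3 * u * s - u * s * real CARD('n) - 2 * u * s) / (s\<^sup>2 * sqrt s))"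
    using e by (simp add: s_def u_def inner_commute norm_eq_1)
  define r where "r = sqrt s"
  have r: "r > 0" and s_r: "s = r * r"
    using s by (simp_all add: r_def)
  have "norm y = r"
    by (simp add: r_def s_def norm_eq_sqrt_inner)
  then show ?thesis
    unfolding L A_def B_def u_def[symmetric] s_def[symmetric] r_def[symmetric]
    unfolding s_r using r by (simp add: field_simps power2_eq_square)
qed

section \<open>Variances of zonal polynomials\<close>

lemma integral_zonal_poly:
  fixes e :: "real ^ 'n"
  shows "(\<integral>x. poly p (x \<bullet> e) \<partial>sphere_measure) = moment_functional (sphere_moment e) p"
proof -
  have "(\<integral>x. poly p (x \<bullet> e) \<partial>sphere_measure) =
      (\<integral>x. (\<Sum>k\<le>degree p. coeff p k * (x \<bullet> e) ^ k) \<partial>sphere_measure)"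
    by (simp add: poly_altdef)
  also have "\<dots> = (\<Sum>k\<le>degree p. coeff p k * sphere_moment e k)"
    by (subst Bochner_Integration.integral_sum)
       (auto intro!: integrable_sphere_measure_continuous continuous_intros simp: sphere_moment_def)
  finally show ?thesis
    by (simp add: moment_functional_def)
qed

lemma gegenbauer_moments_sphere_moment:
  fixes e :: "real ^ 'n"
  assumes e: "norm e = 1" and n: "CARD('n) \<ge> 3" and lam: "lam = (real CARD('n) - 2) / 2"
  shows "gegenbauer_moments (sphere_moment e) lam"
proof
  show "sphere_moment e 0 > 0" "sphere_moment e 1 = 0" "lam > 0"
    using n lam by (simp_all add: sphere_moment_0_pos sphere_moment_odd)
  fix k
  show "sphere_moment e (k + 2) * (real k + 2 * lam + 2) = (real k + 1) * sphere_moment e k"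
  proof (cases "even k")
    case True
    have "real k + 2 * lam + 2 = real k + real CARD('n)"
      using lam by simp
    then show ?thesis
      using sphere_moment_recurrence[OF e True] by (simp only: add.assoc)
  next
    case False
    then show ?thesis
      by (simp add: sphere_moment_odd)
  qed
qed

lemma var_S_zonal_poly:
  fixes e :: "real ^ 'n"
  assumes e: "norm e = 1"
  shows "var_S (\<lambda>x. poly p (x \<bullet> e)) =
    (moment_functional (sphere_moment e) (p * p) /
      \<bar>moment_functional (sphere_moment e) (X_poly * p * p)\<bar>)\<^sup>2 - 1"
proof -
  have "(\<integral>x. (poly p (x \<bullet> e))\<^sup>2 *\<^sub>R x \<partial>sphere_measure) =
      (\<integral>x. (poly p (x \<bullet> e))\<^sup>2 * (x \<bullet> e) \<partial>sphere_measure) *\<^sub>R e"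
    by (rule integral_zonal_scaleR[OF e]) (intro continuous_intros)
  also have "(\<integral>x. (poly p (x \<bullet> e))\<^sup>2 * (x \<bullet> e) \<partial>sphere_measure) =
      moment_functional (sphere_moment e) (X_poly * p * p)"
    by (simp add: integral_zonal_poly[symmetric] power2_eq_square mult_ac)
  finally show ?thesis
    using e by (simp add: var_S_def integral_zonal_poly[symmetric] power2_eq_square)
qed

lemma borel_measurable_poly [measurable]:
  fixes p :: "real poly"
  shows "poly p \<in> borel_measurable borel"
  by (intro borel_measurable_continuous_onI continuous_on_poly continuous_on_id)

lemma borel_measurable_laplace_beltrami_zonal_poly:
  fixes e :: "real ^ 'n"
  assumes e: "norm e = 1"
  shows "laplace_beltrami (\<lambda>x. poly p (x \<bullet> e)) \<in> borel_measurable borel"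
proof -
  define F where "F y = (poly (pderiv (pderiv p)) ((y \<bullet> e) / norm y) * (1 - ((y \<bullet> e) / norm y)\<^sup>2)
      - (real CARD('n) - 1) * ((y \<bullet> e) / norm y) * poly (pderiv p) ((y \<bullet> e) / norm y)) / (y \<bullet> y)"
    for y :: "real ^ 'n"
  have "laplace_beltrami (\<lambda>x. poly p (x \<bullet> e)) =
      (\<lambda>y. if y = 0 then laplace_beltrami (\<lambda>x. poly p (x \<bullet> e)) 0 else F y)"
    by (auto simp: F_def laplace_beltrami_zonal_poly[OF e])
  moreover have "(\<lambda>y. if y = 0 then laplace_beltrami (\<lambda>x. poly p (x \<bullet> e)) 0 else F y) \<in>
      borel_measurable borel"
    unfolding F_def by measurable
  ultimately show ?thesis
    by simp
qed

lemma var_M_zonal_poly: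
  fixes e :: "real ^ 'n"
  assumes e: "norm e = 1" and lam: "real CARD('n) = 2 * lam + 2"
  shows "var_M (\<lambda>x. poly p (x \<bullet> e)) =
    - moment_functional (sphere_moment e) (gegenbauer_operator lam p * p) /
      moment_functional (sphere_moment e) (p * p)"
proof -
  have on_sphere: "laplace_beltrami (\<lambda>x. poly p (x \<bullet> e)) x * poly p (x \<bullet> e) =
      poly (gegenbauer_operator lam p * p) (x \<bullet> e)" if "norm x = 1" for x
  proof -
    have "x \<noteq> 0" "x \<bullet> x = 1" "real CARD('n) - 1 = 2 * lam + 1"
      using that lam by (auto simp: norm_eq_1)
    then show ?thesis
      by (simp add: laplace_beltrami_zonal_poly[OF e] gegenbauer_operator_def that power2_eq_square
          algebra_simps)
  qed
  have "(\<integral>x. laplace_beltrami (\<lambda>x. poly p (x \<bullet> e)) x * poly p (x \<bullet> e) \<partial>sphere_measure) =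
      (\<integral>x. poly (gegenbauer_operator lam p * p) (x \<bullet> e) \<partial>sphere_measure)"
  proof (rule integral_cong_AE)
    show "(\<lambda>x. laplace_beltrami (\<lambda>x. poly p (x \<bullet> e)) x * poly p (x \<bullet> e)) \<in>
        borel_measurable sphere_measure"
      using borel_measurable_laplace_beltrami_zonal_poly[OF e] by measurable
    show "(\<lambda>x. poly (gegenbauer_operator lam p * p) (x \<bullet> e)) \<in> borel_measurable sphere_measure"
      by (intro borel_measurable_sphere_measure_continuous continuous_intros)
    show "AE x in sphere_measure. laplace_beltrami (\<lambda>x. poly p (x \<bullet> e)) x * poly p (x \<bullet> e) =
        poly (gegenbauer_operator lam p * p) (x \<bullet> e)"
      using AE_sphere_measure_norm by eventually_elim (rule on_sphere)
  qed
  then show ?thesis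
    by (simp add: var_M_def integral_zonal_poly[symmetric] power2_eq_square)
qed

theorem proposition1:
  fixes e :: "real ^ 'n" and c :: real and m :: nat and lam :: real
  assumes "CARD('n) \<ge> 3"
    and "lam = (real CARD('n) - 2) / 2"
    and "norm e = 1"
    and "c \<noteq> 0"
  defines "Phi \<equiv> (\<lambda>x :: real ^ 'n.
             c * (\<Sum>l\<le>m. (real l + lam) / lam * gegenbauer lam l (x \<bullet> e)))"
  shows "var_S Phi = ((2 * real m + 2 * lam + 1) / (2 * real m))\<^sup>2 - 1 \<and>
         var_M Phi = real m * (real m + 2 * lam + 1) * (2 * lam + 1) / (2 * lam + 3)"
proof -
  interpret gegenbauer_moments "sphere_moment e" lam
    by (rule gegenbauer_moments_sphere_moment[OF assms(3,1,2)])
  have real_CARD: "real CARD('n) = 2 * lam + 2"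
    using assms(2) by simp
  define K where "K = gegenbauer_kernel lam m"
  have Phi: "Phi = (\<lambda>x. poly (smult c K) (x \<bullet> e))"
    by (simp add: Phi_def K_def gegenbauer_kernel_def poly_sum poly_gegenbauer_poly)
  have "var_S Phi = (moment_functional (sphere_moment e) (K * K) /
      \<bar>moment_functional (sphere_moment e) (X_poly * K * K)\<bar>)\<^sup>2 - 1"
    unfolding Phi var_S_zonal_poly[OF assms(3)] using assms(4)
    by (simp add: moment_functional_smult abs_mult)
  also have "\<dots> = ((2 * real m + 2 * lam + 1) / (2 * real m))\<^sup>2 - 1"
    unfolding K_def moment_functional_kernel_sq_ratio ..
  finally have var_S: "var_S Phi = ((2 * real m + 2 * lam + 1) / (2 * real m))\<^sup>2 - 1" .
  have "var_M Phi = - moment_functional (sphere_moment e) (gegenbauer_operator lam K * K) /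
      moment_functional (sphere_moment e) (K * K)"
    unfolding Phi var_M_zonal_poly[OF assms(3) real_CARD] using assms(4)
    by (simp add: gegenbauer_operator_smult moment_functional_smult)
  also have "\<dots> = real m * (real m + 2 * lam + 1) * (2 * lam + 1) / (2 * lam + 3)"
    unfolding K_def by (rule moment_functional_operator_kernel_sq_ratio)
  finally show ?thesis
    using var_S by simp
qed

end
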